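(* For all $a\in\mathbb F$, $i\in\mathbb Z$, $k\in K$, the following hold (in $(\mathcal U(\mathcal L)\otimes\mathcal U(\mathcal L))[[t]]$ for (1)–(4), in $\mathcal U(\mathcal L)[[t]]$ for (5)–(6)): (1) $(L_i\otimes1)F_a=\sum_{s=0}^{\infty}\alpha^s\left[\begin{matrix}(s-2)m-i\\ s\end{matrix}\right]_m F_{a-\frac im+s}\,(L_{i-sm}\otimes Y^st^s)$; (2) $(G_k\otimes1)F_a=\sum_{s=0}^{\infty}\alpha^s\left[\begin{matrix}(s-\frac32)m-k\\ s\end{matrix}\right]_m F_{a-\frac km+s}\,(G_{k-sm}\otimes Y^st^s)$; (3) $(1\otimes L_i)F_a=\sum_{s=0}^{\infty}(-1)^sF_{a+s}\Big(\sum_{p=0}^{2s}\alpha^pa_p(s,i)\,X_a^{<s>}\otimes L_{i+(s-p)m}t^s\Big)$; (4) $(1\otimes G_k)F_a=\sum_{s=0}^{\infty}(-1)^sF_{a+s}\Big(\sum_{p=0}^{2s}\alpha^pb_p(s,k)\,X_a^{<s>}\otimes G_{k+(s-p)m}t^s\Big)$; (5) $L_iu_a=u_{a+\frac im}\sum_{s=0}^{\infty}\sum_{p=0}^{\infty}\sum_{q=0}^{2p}(-1)^s\alpha^{s+q}\left[\begin{matrix}(s-2)m-i\\ s\end{matrix}\right]_m a_q(p,i-sm)\,X_{-a-\frac im}^{[p]}L_{i+(p-s-q)m}Y^st^{s+p}$; (6) $G_ku_a=u_{a+\frac km}\sum_{s=0}^{\infty}\sum_{p=0}^{\infty}\sum_{q=0}^{2p}(-1)^s\alpha^{s+q}\left[\begin{matrix}(s-\frac32)m-k\\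 s\end{matrix}\right]_m b_q(p,k-sm)\,X_{-a-\frac km}^{[p]}G_{k+(p-s-q)m}Y^st^{s+p}$.
   Context: Let $\mathbb F$ be a field of characteristic zero. Fix $\varepsilon\in\{0,\tfrac12\}$ and set $K=\varepsilon+\mathbb Z$. The super-Virasoro algebra (without central extension) $\mathcal L$ is the Lie superalgebra over $\mathbb F$ with even basis $\{L_i\}_{i\in\mathbb Z}$, odd basis $\{G_k\}_{k\in K}$, and brackets $[L_i,L_j]=(j-i)L_{i+j}$, $[L_i,G_k]=(k-\frac i2)G_{i+k}$, $[G_k,G_l]=2L_{k+l}$. $\mathcal U(\mathcal L)$ is its universal enveloping superalgebra, $\mathcal U(\mathcal L)[[t]]$ the formal power series in $t$ over it; tensor products of superalgebras use the sign rule $(a\otimes b)(c\otimes d)=(-1)^{[b][c]}ac\otimes bd$. Fix a nonzero integer $m$ and $\alpha\in\mathbb F$. Put $X=\frac1m(L_0+\alpha mL_{-m})$ and $Y=\exp(\alpha\,\mathrm{ad}\,L_{-m})(L_m)=L_m+2\alpha mL_0+\alpha^2m^2L_{-m}$ (both even). For an element $x$ of an algebra, $a\in\mathbb F$, $r\in\mathbb Z_{\ge0}$: $x_a^{<r>}=(x+a)(x+a+1)\cdots(x+a+r-1)$, $x_a^{[r]}=(x+a)(x+a-1)\cdots(x+a-r+1)$ (both $=1$ for $r=0$). For $a,c\in\mathbb F$, $r\in\mathbb Z_{\ge0}$: $\left[\begin{matrix}a\\ r\end{matrix}\right]_c=\frac{a(a-c)\cdots(a-(r-1)c)}{r!}$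 ($=1$ if $r=0$). For $r,s\in\mathbb Z_{\ge0}$, $i\in\mathbb Z$, $k\in\frac12\mathbb Z$: $a_s(r,i)=\sum_{p=0}^{s}(-1)^p\left[\begin{matrix}i+m\\ p\end{matrix}\right]_m\left[\begin{matrix}i+(r-p-2)m\\ r\end{matrix}\right]_m\left[\begin{matrix}i+(r-p+1)m\\ s-p\end{matrix}\right]_m$, $b_s(r,k)=\sum_{p=0}^{s}(-1)^p\left[\begin{matrix}k+\frac m2\\ p\end{matrix}\right]_m\left[\begin{matrix}k+(r-p-\frac32)m\\ r\end{matrix}\right]_m\left[\begin{matrix}k+(r-p+\frac12)m\\ s-p\end{matrix}\right]_m$. For $a\in\mathbb F$ define $F_a=\sum_{r\ge0}\frac1{r!}X_a^{<r>}\otimes Y^rt^r$ and $u_a=\sum_{r\ge0}\frac{(-1)^r}{r!}X_{-a}^{[r]}Y^rt^r$. *)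

theory Defs
  imports "HOL-Computational_Algebra.Formal_Power_Series"
begin

definition lprod :: "'b::ring_1 list \<Rightarrow> 'b" where
  "lprod xs = foldr (*) xs 1"

(* x^{<r>} with x already shifted: (y)(y+1)...(y+r-1) *)
definition rise :: "'b::ring_1 \<Rightarrow> nat \<Rightarrow> 'b" where
  "rise y r = lprod (map (\<lambda>j. y + of_nat j) [0..<r])"

(* x^{[r]} with x already shifted: (y)(y-1)...(y-r+1) *)
definition fall :: "'b::ring_1 \<Rightarrow> nat \<Rightarrow> 'b" where
  "fall y r = lprod (map (\<lambda>j. y - of_nat j) [0..<r])"

definition gbin :: "'f::field_char_0 \<Rightarrow> 'f \<Rightarrow> nat \<Rightarrow> 'f" where
  "gbin c a r = (\<Prod>j<r. (a - of_nat j * c)) / fact r"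

definition acoef :: "int \<Rightarrow> nat \<Rightarrow> int \<Rightarrow> nat \<Rightarrow> 'f::field_char_0" where
  "acoef m r i s = (\<Sum>p\<le>s. (-1) ^ p
      * gbin (of_int m) (of_int i + of_int m) p
      * gbin (of_int m) (of_int i + (of_nat r - of_nat p - 2) * of_int m) r
      * gbin (of_int m) (of_int i + (of_nat r - of_nat p + 1) * of_int m) (s - p))"

(* b_s(r,k), k given as a field element *)
definition bcoef :: "int \<Rightarrow> nat \<Rightarrow> 'f \<Rightarrow> nat \<Rightarrow> 'f::field_char_0" where
  "bcoef m r k s = (\<Sum>p\<le>s. (-1) ^ p
      * gbin (of_int m) (k + of_int m / 2) p
      * gbin (of_int m) (k + (of_nat r - of_nat p - 3 / 2) * of_int m) r
      * gbin (of_int m) (k + (of_nat r - of_nat p + 1 / 2) * of_int m) (s - p))"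

(* t-adically convergent infinite sum of formal power series: the n-th coefficient
   is the (finite) sum of the n-th coefficients of the summands. *)
definition fps_tsum :: "(nat \<Rightarrow> 'b::comm_monoid_add fps) \<Rightarrow> 'b fps" where
  "fps_tsum f = Abs_fps (\<lambda>n. \<Sum>s\<in>{s. fps_nth (f s) n \<noteq> 0}. fps_nth (f s) n)"

(* emb : F -> A is a central unital ring homomorphism, i.e. A is a unital associative F-algebra *)
definition central_emb :: "('f::field_char_0 \<Rightarrow> 'b::ring_1) \<Rightarrow> bool" where
  "central_emb emb \<longleftrightarrow> emb 1 = 1 \<and> (\<forall>x y. emb (x + y) = emb x + emb y)
     \<and> (\<forall>x y. emb (x * y) = emb x * emb y) \<and> (\<forall>x b. emb x * b = b * emb x)"

(* L : Z -> A, G : Z -> A (G j stands for G_{j+eps}, eps = eps2/2) satisfy the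
   super-Virasoro relations (i.e. they define an algebra homomorphism U(L) -> A) *)
definition svir_rel :: "('f::field_char_0 \<Rightarrow> 'b::ring_1) \<Rightarrow> int \<Rightarrow> (int \<Rightarrow> 'b) \<Rightarrow> (int \<Rightarrow> 'b) \<Rightarrow> bool" where
  "svir_rel emb eps2 L G \<longleftrightarrow>
     (\<forall>i j. L i * L j - L j * L i = emb (of_int j - of_int i) * L (i + j))
   \<and> (\<forall>i j. L i * G j - G j * L i = emb (of_int j + of_int eps2 / 2 - of_int i / 2) * G (i + j))
   \<and> (\<forall>j l. G j * G l + G l * G j = emb 2 * L (j + l + eps2))"

(* two copies super-commute (copy 1 = x \<otimes> 1, copy 2 = 1 \<otimes> y) *)
definition svir_supercomm :: "(int \<Rightarrow> 'b::ring_1) \<Rightarrow> (int \<Rightarrow> 'b) \<Rightarrow> (int \<Rightarrow> 'b) \<Rightarrow> (int \<Rightarrow> 'b) \<Rightarrow> bool" where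
  "svir_supercomm L1 G1 L2 G2 \<longleftrightarrow>
     (\<forall>i j. L1 i * L2 j = L2 j * L1 i) \<and> (\<forall>i j. L1 i * G2 j = G2 j * L1 i)
   \<and> (\<forall>i j. G1 i * L2 j = L2 j * G1 i) \<and> (\<forall>i j. G1 i * G2 j = - (G2 j * G1 i))"

definition Xel :: "('f::field_char_0 \<Rightarrow> 'b::ring_1) \<Rightarrow> int \<Rightarrow> 'f \<Rightarrow> (int \<Rightarrow> 'b) \<Rightarrow> 'b" where
  "Xel emb m \<alpha> L = emb (1 / of_int m) * (L 0 + emb (\<alpha> * of_int m) * L (- m))"

definition Yel :: "('f::field_char_0 \<Rightarrow> 'b::ring_1) \<Rightarrow> int \<Rightarrow> 'f \<Rightarrow> (int \<Rightarrow> 'b) \<Rightarrow> 'b" where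
  "Yel emb m \<alpha> L = L m + emb (2 * \<alpha> * of_int m) * L 0 + emb (\<alpha>^2 * of_int m ^ 2) * L (- m)"

(* F_a = sum_r 1/r! X_a^{<r>} \<otimes> Y^r t^r, with X \<otimes> 1 from copy 1, 1 \<otimes> Y from copy 2 *)
definition Fser :: "('f::field_char_0 \<Rightarrow> 'b::ring_1) \<Rightarrow> int \<Rightarrow> 'f \<Rightarrow> (int \<Rightarrow> 'b) \<Rightarrow> (int \<Rightarrow> 'b) \<Rightarrow> 'f \<Rightarrow> 'b fps" where
  "Fser emb m \<alpha> L1 L2 a = fps_tsum (\<lambda>r.
      fps_const (emb (1 / fact r) * rise (Xel emb m \<alpha> L1 + emb a) r * Yel emb m \<alpha> L2 ^ r) * fps_X ^ r)"

definition user :: "('f::field_char_0 \<Rightarrow> 'b::ring_1) \<Rightarrow> int \<Rightarrow> 'f \<Rightarrow> (int \<Rightarrow> 'b) \<Rightarrow> 'f \<Rightarrow> 'b fps" where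
  "user emb m \<alpha> L a = fps_tsum (\<lambda>r.
      fps_const (emb ((-1) ^ r / fact r) * fall (Xel emb m \<alpha> L + emb (- a)) r * Yel emb m \<alpha> L ^ r) * fps_X ^ r)"

end

theory Submission
  imports Defs
begin

(*
  The enveloping algebras are replaced by
  an arbitrary unital F-algebra (via a central embedding of F) containing two super-commuting
  copies L1, G1 and L2, G2 of the generators; copy 1 plays the role of x \<otimes> 1, copy 2 of 1 \<otimes> y.

  All six identities are instances of three statements about an integer-indexed family
  e_n of elements of a unital F-algebra (e_n = L_{i+nm} or e_n = G_{j+nm}).  Such a family
  has weights x_n = x_0 + n m and a spin gamma (1 for L, 1/2 for G), and the
  super-Virasoro relations give
    (X)  e_n X = (X - x_n/m) e_n - alpha (x_n + gamma m) e_{n-1}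
    (Y)  [Y, e_n] = (x_n - gamma m) e_{n+1} + 2 alpha m x_n e_n
                   + alpha^2 m^2 (x_n + gamma m) e_{n-1}.
  From (X) alone we move e_0 through a rising or falling factorial of X; the coefficients
  are the generalised binomials kappa_s.  From (Y) we compute the iterated commutators
  ad_Y^s(e_0), whose coefficients are a_p(s,.) resp. b_p(s,.) (one unified family
  ladder_coef), and hence e_0 Y^N.  Comparing coefficients of t^N then gives
    (1),(2): e from the first tensor factor passes through F_a, using (X);
    (3),(4): e from the second tensor factor passes through F_a, using (Y);
    (5),(6): e passes through u_a, using (X), (Y) and Y X = (X - 1) Y.
*)

unbundle fps_syntax

locale central_scalars =
  fixes emb :: "'f::field_char_0 \<Rightarrow> 'b::ring_1"
  assumes ce: "central_emb emb"
begin

lemma emb_one[simp]: "emb 1 = 1" using ce unfolding central_emb_def by blast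
lemma emb_add[simp]: "emb (x + y) = emb x + emb y" using ce unfolding central_emb_def by blast
lemma emb_mult: "emb (x * y) = emb x * emb y" using ce unfolding central_emb_def by blast
lemma emb_comm: "emb x * b = b * emb x" using ce unfolding central_emb_def by blast

lemma emb_zero[simp]: "emb 0 = 0"
  using emb_add[of 0 0] by simp
lemma emb_uminus[simp]: "emb (- x) = - emb x"
  using emb_add[of x "-x"] by (metis add.right_inverse emb_zero minus_unique)
lemma emb_diff[simp]: "emb (x - y) = emb x - emb y"
  using emb_add[of x "-y"] by simp
lemma emb_of_nat[simp]: "emb (of_nat n) = of_nat n"
  by (induct n) auto
lemma emb_power: "emb (x ^ n) = emb x ^ n"
  by (induct n) (auto simp: emb_mult)

definition sc :: "'f \<Rightarrow> 'b \<Rightarrow> 'b" where "sc c b = emb c * b"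

lemma emb_left_comm: "b * (emb x * c) = emb x * (b * c)"
  by (metis emb_comm mult.assoc)

lemma sc_mult_left: "b * sc c d = sc c (b * d)" by (simp add: sc_def emb_left_comm)
lemma sc_mult_right: "sc c b * d = sc c (b * d)" by (simp add: sc_def mult.assoc)
lemma sc_sc: "sc c (sc d b) = sc (c * d) b" by (simp add: sc_def emb_mult mult.assoc)
lemma sc_comm: "sc a (sc b z) = sc b (sc a z)" by (simp add: sc_sc mult.commute)
lemma sc_add: "sc c (a + b) = sc c a + sc c b" by (simp add: sc_def distrib_left)
lemma sc_diff: "sc c (a - b) = sc c a - sc c b" by (simp add: sc_def right_diff_distrib)
lemma sc_uminus: "sc (- c) a = - sc c a" by (simp add: sc_def)
lemma sc_addc: "sc c a + sc d a = sc (c + d) a" by (simp add: sc_def distrib_right)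
lemma sc_sum: "sc c (sum f A) = (\<Sum>x\<in>A. sc c (f x))" by (simp add: sc_def sum_distrib_left)
lemma sc_0[simp]: "sc 0 a = 0" by (simp add: sc_def)
lemma sc_zero[simp]: "sc c 0 = 0" by (simp add: sc_def)
lemma sc_1[simp]: "sc 1 a = a" by (simp add: sc_def)
lemma sc_cong: "c = d \<Longrightarrow> sc c a = sc d a" by simp

lemma emb_mult_sc: "emb c * b = sc c b" by (simp add: sc_def)
lemma mult_emb_sc: "b * emb c = sc c b" by (simp add: sc_def emb_comm)
lemma of_nat_sc: "of_nat n * W = sc (of_nat n) W" by (simp add: sc_def)
lemma minus_one_power_sc: "(-1) ^ s * W = sc ((-1) ^ s) W" by (simp add: sc_def emb_power)

lemmas sc_normalise = emb_mult_sc mult_emb_sc sc_mult_left sc_mult_right sc_sc mult_1_left mult_1_right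

end


section \<open>Rising and falling factorials\<close>

lemma lprod_append: "lprod (xs @ ys) = lprod xs * lprod ys"
  unfolding lprod_def by (induct xs) (auto simp: mult.assoc)

lemma rise_0[simp]: "rise y 0 = 1" and fall_0[simp]: "fall y 0 = 1"
  by (auto simp: rise_def fall_def lprod_def)

lemma rise_Suc: "rise y (Suc n) = rise y n * (y + of_nat n)"
  unfolding rise_def by (simp add: lprod_append) (simp add: lprod_def)

lemma fall_Suc: "fall y (Suc n) = fall y n * (y - of_nat n)"
  unfolding fall_def by (simp add: lprod_append) (simp add: lprod_def)

lemma rise_Suc': "rise y (Suc n) = y * rise (y + 1) n"
proof -
  have "[0..<Suc n] = 0 # map Suc [0..<n]" by (simp add: map_Suc_upt upt_conv_Cons)
  then show ?thesis unfolding rise_def by (simp add: lprod_def o_def add.assoc)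
qed

lemma fall_Suc': "fall y (Suc n) = y * fall (y - 1) n"
proof -
  have "[0..<Suc n] = 0 # map Suc [0..<n]" by (simp add: map_Suc_upt upt_conv_Cons)
  then show ?thesis unfolding fall_def by (simp add: lprod_def o_def diff_diff_eq)
qed

lemma rise_add: "rise y (n + k) = rise y n * rise (y + of_nat n) k"
  by (induct k) (simp_all add: rise_Suc mult.assoc add.assoc)

lemma fall_add: "fall y (n + k) = fall y n * fall (y - of_nat n) k"
  by (induct k) (simp_all add: fall_Suc mult.assoc diff_diff_eq)

lemma rise_comm: "w * y = y * w \<Longrightarrow> w * rise y n = rise y n * w"
proof (induct n)
  case (Suc n)
  have "w * (y + of_nat n) = (y + of_nat n) * w" using Suc(2)
    by (simp add: distrib_left distrib_right mult_of_nat_commute)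
  then show ?case using Suc(1)[OF Suc(2)]
    by (simp add: rise_Suc mult.assoc[symmetric]) (simp add: mult.assoc)
qed simp

lemma comm_pow: "(a::'a::monoid_mult) * b = b * a \<Longrightarrow> a * b ^ n = b ^ n * a"
  by (induct n) (simp_all add: mult.assoc[symmetric], metis mult.assoc)

context central_scalars begin

definition XE :: "'b \<Rightarrow> 'f \<Rightarrow> 'b" where "XE X c = X + emb c"

lemma XE_comm: "XE X c * XE X d = XE X d * XE X c"
  unfolding XE_def
  by (simp add: distrib_left distrib_right emb_comm[of c X] emb_comm[of d X] emb_comm[of c "emb d"] add_ac)

lemma XE_rise_comm: "XE X c * rise (XE X d) k = rise (XE X d) k * XE X c"
  by (rule rise_comm) (rule XE_comm)

lemma rise_rise_comm: "rise (XE X c) n * rise (XE X d) k = rise (XE X d) k * rise (XE X c) n"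
  by (intro rise_comm[symmetric] XE_rise_comm[symmetric])

lemma XE_add_nat: "XE X c + of_nat n = XE X (c + of_nat n)"
  by (simp add: XE_def add.assoc)

lemma XE_diff_nat: "XE X c - of_nat n = XE X (c - of_nat n)"
  by (simp add: XE_def add_diff_eq)

lemma rise_XE: "rise (XE X c) (Suc n) = rise (XE X c) n * XE X (c + of_nat n)"
  unfolding XE_def by (simp only: rise_Suc emb_add emb_of_nat add.assoc)
lemma rise_XE': "rise (XE X c) (Suc n) = XE X c * rise (XE X (c + 1)) n"
  unfolding XE_def by (simp only: rise_Suc' emb_add emb_one add.assoc)
lemma fall_XE: "fall (XE X c) (Suc n) = fall (XE X c) n * XE X (c - of_nat n)"
  unfolding XE_def by (simp only: fall_Suc emb_diff emb_of_nat add_diff_eq)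
lemma fall_XE': "fall (XE X c) (Suc n) = XE X c * fall (XE X (c - 1)) n"
  unfolding XE_def by (simp only: fall_Suc' emb_diff emb_one add_diff_eq)

lemma comm_XE: "E * X = X * E \<Longrightarrow> E * XE X c = XE X c * E"
  by (simp add: XE_def distrib_left distrib_right emb_comm[of c E])

lemma sc_XE: "sc p (XE X q) = sc p X + sc (p * q) 1"
  by (simp add: XE_def sc_def distrib_left emb_mult)

lemma Y_fall:
  assumes YX: "Y * X = XE X (-1) * Y"
  shows "Y * fall (XE X c) p = fall (XE X (c - 1)) p * Y"
proof (induct p arbitrary: c)
  case (Suc p)
  have yx: "Y * XE X d = XE X (d - 1) * Y" for d
  proof -
    have "Y * XE X d = Y * X + Y * emb d" by (simp add: XE_def distrib_left)
    also have "\<dots> = XE X (-1) * Y + emb d * Y" by (simp add: YX emb_comm[of d Y])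
    also have "\<dots> = XE X (d - 1) * Y" by (simp add: XE_def distrib_right left_diff_distrib add_ac)
    finally show ?thesis .
  qed
  show ?case unfolding fall_XE' mult.assoc[symmetric] yx
    by (simp add: mult.assoc Suc)
qed simp

lemma Ypow_fall:
  assumes YX: "Y * X = XE X (-1) * Y"
  shows "Y ^ n * fall (XE X c) p = fall (XE X (c - of_nat n)) p * Y ^ n"
proof (induct n arbitrary: c)
  case (Suc n)
  have "Y ^ Suc n * fall (XE X c) p = (Y * fall (XE X (c - of_nat n)) p) * Y ^ n"
    by (simp add: mult.assoc Suc)
  also have "\<dots> = fall (XE X (c - of_nat (Suc n))) p * Y ^ Suc n"
    by (simp add: Y_fall[OF YX] diff_diff_eq add.commute mult.assoc)
  finally show ?case .
qed simp

end

section \<open>Generalised binomial coefficients\<close>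

lemma gbin_0[simp]: "gbin c a 0 = 1" by (simp add: gbin_def)

lemma gbin_Suc: "gbin c a (Suc r) = gbin c a r * (a - of_nat r * c) / of_nat (Suc r)"
  by (simp add: gbin_def field_simps)

lemma gbin_Suc': "gbin c a (Suc r) = a * gbin c (a - c) r / of_nat (Suc r)"
proof -
  have "(\<Prod>j<Suc r. a - of_nat j * c) = a * (\<Prod>j<r. (a - c) - of_nat j * c)"
    by (subst prod.lessThan_Suc_shift) (simp add: algebra_simps)
  then show ?thesis by (simp add: gbin_def field_simps)
qed

text \<open>The coefficient kappa_s = alpha^s [(s - 1 - gamma) m - x over s]_m of identities (1), (2)
  and (5), (6); x is the weight of the element moved and gamma its spin.\<close>

definition kappa :: "'f::field_char_0 \<Rightarrow> 'f \<Rightarrow> 'f \<Rightarrow> 'f \<Rightarrow> nat \<Rightarrow> 'f" where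
  "kappa \<alpha> \<gamma> mm x s = \<alpha> ^ s * gbin mm ((of_nat s - 1 - \<gamma>) * mm - x) s"

lemma kappa_Suc:
  "kappa \<alpha> \<gamma> mm x (Suc s) * of_nat (Suc s) = kappa \<alpha> \<gamma> mm x s * (\<alpha> * ((of_nat s - \<gamma>) * mm - x))"
proof -
  have "(of_nat (Suc s) - 1 - \<gamma>) * mm - x - mm = (of_nat s - 1 - \<gamma>) * mm - x"
    by (simp add: algebra_simps)
  moreover have "(of_nat (Suc s) - 1 - \<gamma>) * mm - x = (of_nat s - \<gamma>) * mm - x" by simp
  ultimately show ?thesis unfolding kappa_def
    by (simp only: gbin_Suc') (simp add: field_simps del: of_nat_Suc)
qed


section \<open>Moving a weight family through factorials of X\<close>

lemma sum_atMost_shift_vanishing: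
  "f 0 = 0 \<Longrightarrow> f (Suc M) = 0 \<Longrightarrow> (\<Sum>s\<le>M. f (Suc s)) = (\<Sum>s\<le>M. (f s :: 'a::comm_monoid_add))"
  using sum.atMost_Suc_shift[of f M] sum.atMost_Suc[of f M] by simp

lemma sum_atMost_single0: "(\<And>s. 0 < s \<Longrightarrow> f s = 0) \<Longrightarrow> (\<Sum>s\<le>M. f s) = f (0::nat)"
  by (induct M) auto

lemma recursion_scalar_a: "(f::'f::field) \<noteq> 0 \<Longrightarrow> w \<noteq> 0 \<Longrightarrow> u \<noteq> 0 \<Longrightarrow>
  1 / w * (1 / f) + 1 / w * ((w - u) / (u * f)) = 1 / (u * f)"
  by (simp add: field_simps)

lemma recursion_scalar_b: "(f::'f::field) \<noteq> 0 \<Longrightarrow> w \<noteq> 0 \<Longrightarrow> u \<noteq> 0 \<Longrightarrow>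
  1 / w * (1 / f) * (d + (w - 1)) + 1 / w * ((w - u) / (u * f)) * (d - 1) = 1 / (u * f) * (d + (u - 1))"
  by (simp add: field_simps)

context central_scalars begin

text \<open>nrise X d N s = (X + d)^{<N-s>} / (N-s)! and nfall X d N s = (X + d)^{[N-s]} / (N-s)!,
  the factorials left over after s steps of moving an element through (X + c)^{<N>} / N!
  resp. (X + c)^{[N]} / N!; they vanish for s > N.\<close>

definition nrise :: "'b \<Rightarrow> 'f \<Rightarrow> nat \<Rightarrow> nat \<Rightarrow> 'b" where
  "nrise X d N s = (if s \<le> N then sc (1 / fact (N - s)) (rise (XE X d) (N - s)) else 0)"

definition nfall :: "'b \<Rightarrow> 'f \<Rightarrow> nat \<Rightarrow> nat \<Rightarrow> 'b" where
  "nfall X d N s = (if s \<le> N then sc (1 / fact (N - s)) (fall (XE X d) (N - s)) else 0)"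

lemma nrise_Suc:
  "sc (1 / of_nat (Suc N)) (nrise X d N s * XE X (d + of_nat N) + sc (of_nat s) (nrise X (d - 1) N (s - 1)))
   = nrise X d (Suc N) s"
proof (cases "s = 0")
  case True
  then show ?thesis
    by (simp add: nrise_def rise_XE sc_normalise del: of_nat_Suc fact_Suc)
       (rule sc_cong, simp add: field_simps del: of_nat_Suc)
next
  case False
  show ?thesis
  proof (cases "s \<le> N")
    case True
    define K where "K = N - s"
    have NK: "N = K + s" "Suc N - s = Suc K" "N - (s - 1) = Suc K" using True False by (auto simp: K_def)
    have r1: "rise (XE X (d - 1)) (Suc K) = rise (XE X d) K * XE X (d - 1)"
      using XE_rise_comm[of X "d - 1" d K] by (simp add: rise_XE')
    have "sc (1 / of_nat (Suc N)) (nrise X d N s * XE X (d + of_nat N) + sc (of_nat s) (nrise X (d - 1) N (s - 1)))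
      = rise (XE X d) K * (sc (1 / of_nat (Suc N)) (sc (1 / fact K) (XE X (d + of_nat N))
          + sc (of_nat s / fact (Suc K)) (XE X (d - 1))))"
      using True False unfolding nrise_def NK(3) K_def[symmetric] r1
      by (simp add: sc_normalise \<open>s \<le> N\<close> le_diff_conv le_SucI sc_add distrib_left del: fact_Suc of_nat_Suc)
    also have "sc (1 / of_nat (Suc N)) (sc (1 / fact K) (XE X (d + of_nat N)) + sc (of_nat s / fact (Suc K)) (XE X (d - 1)))
       = sc (1 / fact (Suc K)) (XE X (d + of_nat K))"
    proof -
      have s_eq: "of_nat s = (of_nat (Suc N) - of_nat (Suc K) :: 'f)" using NK(1) by simp
      have N_eq: "of_nat N = (of_nat (Suc N) - 1 :: 'f)" by simp
      have K_eq: "of_nat K = (of_nat (Suc K) - 1 :: 'f)" by simp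
      have a: "1 / of_nat (Suc N) * (1 / fact K) + 1 / of_nat (Suc N) * (of_nat s / fact (Suc K)) = (1 / fact (Suc K) :: 'f)"
        unfolding fact_Suc s_eq by (rule recursion_scalar_a, simp, rule of_nat_neq_0, rule of_nat_neq_0)
      have b: "1 / of_nat (Suc N) * (1 / fact K) * (d + of_nat N) + 1 / of_nat (Suc N) * (of_nat s / fact (Suc K)) * (d - 1)
          = (1 / fact (Suc K) * (d + of_nat K) :: 'f)"
        unfolding fact_Suc s_eq N_eq K_eq by (rule recursion_scalar_b, simp, rule of_nat_neq_0, rule of_nat_neq_0)
      have split: "sc p (sc q (XE X (d + of_nat N)) + sc r (XE X (d - 1)))
          = sc (p * q + p * r) X + sc (p * q * (d + of_nat N) + p * r * (d - 1)) 1" for p q r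
        by (simp add: sc_add sc_sc sc_XE sc_addc[symmetric] add_ac mult.assoc)
      show ?thesis unfolding split a b by (simp only: sc_XE)
    qed
    finally show ?thesis using True unfolding nrise_def NK(2)
      by (simp add: rise_XE sc_mult_left del: fact_Suc of_nat_Suc)
  next
    case False
    then show ?thesis using \<open>s \<noteq> 0\<close>
      by (cases "s = Suc N") (auto simp: nrise_def sc_normalise simp del: of_nat_Suc)
  qed
qed

lemma nfall_Suc:
  "sc (1 / of_nat (Suc N)) (nfall X d N s * XE X (d + of_nat s - of_nat N) + sc (of_nat s) (nfall X d N (s - 1)))
   = nfall X d (Suc N) s"
proof (cases "s = 0")
  case True
  then show ?thesis
    by (simp add: nfall_def fall_XE sc_normalise del: of_nat_Suc fact_Suc)
       (rule sc_cong, simp add: field_simps del: of_nat_Suc)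
next
  case False
  show ?thesis
  proof (cases "s \<le> N")
    case True
    define K where "K = N - s"
    have NK: "N = K + s" "Suc N - s = Suc K" "N - (s - 1) = Suc K" using True False by (auto simp: K_def)
    have dK: "d + of_nat s - of_nat N = d - of_nat K" using NK(1) by simp
    have "sc (1 / of_nat (Suc N)) (nfall X d N s * XE X (d + of_nat s - of_nat N) + sc (of_nat s) (nfall X d N (s - 1)))
      = fall (XE X d) K * (sc (1 / of_nat (Suc N) * (1 / fact K + of_nat s / fact (Suc K))) (XE X (d - of_nat K)))"
      using True False unfolding nfall_def NK(3) K_def[symmetric] dK fall_XE
      by (simp add: sc_normalise \<open>s \<le> N\<close> le_diff_conv le_SucI sc_add distrib_left sc_addc del: fact_Suc of_nat_Suc)
    also have "1 / of_nat (Suc N) * (1 / fact K + of_nat s / fact (Suc K)) = (1 / fact (Suc K) :: 'f)"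
    proof -
      have s_eq: "of_nat s = (of_nat (Suc N) - of_nat (Suc K) :: 'f)" using NK(1) by simp
      show ?thesis unfolding fact_Suc s_eq distrib_left
        by (rule recursion_scalar_a, simp, rule of_nat_neq_0, rule of_nat_neq_0)
    qed
    finally show ?thesis using True unfolding nfall_def NK(2)
      by (simp add: fall_XE sc_mult_left del: fact_Suc of_nat_Suc)
  next
    case False
    then show ?thesis using \<open>s \<noteq> 0\<close>
      by (cases "s = Suc N") (auto simp: nfall_def sc_normalise simp del: of_nat_Suc)
  qed
qed

definition X_shift :: "'b \<Rightarrow> 'f \<Rightarrow> 'f \<Rightarrow> 'f \<Rightarrow> 'f \<Rightarrow> (int \<Rightarrow> 'b) \<Rightarrow> bool" where
  "X_shift X \<alpha> \<gamma> mm x0 e \<longleftrightarrow> (\<forall>k. e k * X = XE X (- ((x0 + of_int k * mm) / mm)) * e k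
      - sc (\<alpha> * (x0 + of_int k * mm + \<gamma> * mm)) (e (k - 1)))"

lemma X_shift_XE:
  assumes "X_shift X \<alpha> \<gamma> mm x0 e"
  shows "e k * XE X d = XE X (d - (x0 + of_int k * mm) / mm) * e k - sc (\<alpha> * (x0 + of_int k * mm + \<gamma> * mm)) (e (k - 1))"
proof -
  have "e k * XE X d = e k * X + e k * emb d" by (simp add: XE_def distrib_left)
  also have "\<dots> = XE X (- ((x0 + of_int k * mm) / mm)) * e k + emb d * e k
      - sc (\<alpha> * (x0 + of_int k * mm + \<gamma> * mm)) (e (k - 1))"
    using assms unfolding X_shift_def by (simp add: emb_comm)
  also have "XE X (- ((x0 + of_int k * mm) / mm)) * e k + emb d * e k = XE X (d - (x0 + of_int k * mm) / mm) * e k"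
    by (simp add: XE_def distrib_right left_diff_distrib add_ac)
  finally show ?thesis .
qed

text \<open>By (X), passing e_k through a factor X + c gives a shifted factor times e_k
  plus a multiple of e_{k-1}; iterating, the result is a sum over the number s of lowering
  steps, with coefficient kappa_s, of a remainder factorial R N s times e_{n-s}.\<close>

lemma move_through_factorial:
  fixes P :: "nat \<Rightarrow> 'b" and R :: "nat \<Rightarrow> nat \<Rightarrow> 'b" and c :: "nat \<Rightarrow> 'f"
  assumes eX: "X_shift X \<alpha> \<gamma> mm x0 e"
    and P0: "P 0 = 1" and PSuc: "\<And>N. P (Suc N) = P N * XE X (c N)"
    and R0: "\<And>s. R 0 s = (if s = 0 then 1 else 0)"
    and Rbig: "\<And>N s. N < s \<Longrightarrow> R N s = 0"
    and RSuc: "\<And>N s. sc (1 / of_nat (Suc N)) (R N s * XE X (c N - (x0 + of_int (n - int s) * mm) / mm)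
        + sc (of_nat s) (R N (s - 1))) = R (Suc N) s"
    and NM: "N \<le> M"
  shows "e n * sc (1 / fact N) (P N)
    = (\<Sum>s\<le>M. sc (kappa \<alpha> \<gamma> mm (x0 + of_int n * mm) s) (R N s * e (n - int s)))"
  using NM
proof (induct N arbitrary: M)
  case 0
  show ?case by (subst sum_atMost_single0) (auto simp: R0 P0 kappa_def sc_def)
next
  case (Suc N)
  define \<kappa> where "\<kappa> = kappa \<alpha> \<gamma> mm (x0 + of_int n * mm)"
  define \<beta> where "\<beta> s = \<alpha> * (x0 + of_int (n - int s) * mm + \<gamma> * mm)" for s
  define D where "D s = c N - (x0 + of_int (n - int s) * mm) / mm" for s
  define f where "f s = sc (\<kappa> s) (R N s * XE X (D s) * e (n - int s))" for s
  define g where "g s = sc (\<kappa> s * of_nat s) (R N (s - 1) * e (n - int s))" for s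
  have IH: "e n * sc (1 / fact N) (P N) = (\<Sum>s\<le>M. sc (\<kappa> s) (R N s * e (n - int s)))"
    using Suc by (simp add: \<kappa>_def)
  have \<kappa>_rec: "\<kappa> (Suc s) * of_nat (Suc s) = - (\<kappa> s * \<beta> s)" for s
    unfolding \<kappa>_def \<beta>_def kappa_Suc by (simp add: algebra_simps)
  text \<open>One passage of e_{n-s} through the new factor X + c_N.\<close>
  have pass: "sc (\<kappa> s) (R N s * e (n - int s) * XE X (c N)) = f s + g (Suc s)" for s
  proof -
    have "g (Suc s) = sc (- (\<kappa> s * \<beta> s)) (R N s * e (n - int s - 1))"
      unfolding g_def \<kappa>_rec by (simp add: diff_diff_eq add.commute)
    then show ?thesis
      unfolding f_def mult.assoc X_shift_XE[OF eX] D_def \<beta>_def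
      by (simp add: right_diff_distrib sc_diff sc_normalise sc_uminus del: of_nat_Suc)
  qed
  have "e n * sc (1 / fact (Suc N)) (P (Suc N))
      = sc (1 / of_nat (Suc N)) (e n * sc (1 / fact N) (P N) * XE X (c N))"
    by (simp add: PSuc sc_normalise mult.assoc del: of_nat_Suc)
  also have "\<dots> = sc (1 / of_nat (Suc N)) (\<Sum>s\<le>M. f s + g (Suc s))"
    unfolding IH sum_distrib_right using pass by (simp add: sc_mult_right)
  also have "(\<Sum>s\<le>M. f s + g (Suc s)) = (\<Sum>s\<le>M. f s + g s)"
    using sum_atMost_shift_vanishing[of g M] Suc.prems
    by (simp add: sum.distrib g_def Rbig)
  also have "sc (1 / of_nat (Suc N)) (\<Sum>s\<le>M. f s + g s) = (\<Sum>s\<le>M. sc (\<kappa> s) (R (Suc N) s * e (n - int s)))"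
    unfolding sc_sum
  proof (rule sum.cong[OF refl])
    fix s
    have "f s + g s = sc (\<kappa> s) ((R N s * XE X (D s) + sc (of_nat s) (R N (s - 1))) * e (n - int s))"
      unfolding f_def g_def by (simp add: distrib_right sc_add sc_normalise)
    then show "sc (1 / of_nat (Suc N)) (f s + g s) = sc (\<kappa> s) (R (Suc N) s * e (n - int s))"
      using RSuc[of N s] unfolding D_def
      by (simp add: sc_comm[of "1 / of_nat (Suc N)"] sc_mult_right[symmetric] del: of_nat_Suc)
  qed
  finally show ?case by (simp add: \<kappa>_def)
qed

lemma move_through_rise:
  assumes mm: "mm \<noteq> 0" and eX: "X_shift X \<alpha> \<gamma> mm x0 e"
  shows "e n * sc (1 / fact N) (rise (XE X c) N)
    = (\<Sum>s\<le>N. sc (kappa \<alpha> \<gamma> mm (x0 + of_int n * mm) s)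
         (nrise X (c - (x0 + of_int n * mm) / mm + of_nat s) N s * e (n - int s)))"
proof (rule move_through_factorial[OF eX, where c = "\<lambda>N. c + of_nat N"])
  fix N s
  have shift: "c + of_nat N - (x0 + of_int (n - int s) * mm) / mm
      = c - (x0 + of_int n * mm) / mm + of_nat s + of_nat N"
    using mm by (simp add: field_simps)
  have lowered: "sc (of_nat s) (nrise X (c - (x0 + of_int n * mm) / mm + of_nat (s - 1)) N (s - 1))
      = sc (of_nat s) (nrise X (c - (x0 + of_int n * mm) / mm + of_nat s - 1) N (s - 1))"
    by (cases s) (simp_all add: algebra_simps)
  show "sc (1 / of_nat (Suc N)) (nrise X (c - (x0 + of_int n * mm) / mm + of_nat s) N s
        * XE X (c + of_nat N - (x0 + of_int (n - int s) * mm) / mm)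
      + sc (of_nat s) (nrise X (c - (x0 + of_int n * mm) / mm + of_nat (s - 1)) N (s - 1)))
    = nrise X (c - (x0 + of_int n * mm) / mm + of_nat s) (Suc N) s"
    unfolding shift lowered by (rule nrise_Suc)
qed (simp_all add: rise_XE nrise_def)

lemma move_through_fall:
  assumes mm: "mm \<noteq> 0" and eX: "X_shift X \<alpha> \<gamma> mm x0 e"
  shows "e n * sc (1 / fact N) (fall (XE X c) N)
    = (\<Sum>s\<le>N. sc (kappa \<alpha> \<gamma> mm (x0 + of_int n * mm) s)
         (nfall X (c - (x0 + of_int n * mm) / mm) N s * e (n - int s)))"
proof (rule move_through_factorial[OF eX, where c = "\<lambda>N. c - of_nat N"])
  fix N s
  have shift: "c - of_nat N - (x0 + of_int (n - int s) * mm) / mm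
      = c - (x0 + of_int n * mm) / mm + of_nat s - of_nat N"
    using mm by (simp add: field_simps)
  show "sc (1 / of_nat (Suc N)) (nfall X (c - (x0 + of_int n * mm) / mm) N s
        * XE X (c - of_nat N - (x0 + of_int (n - int s) * mm) / mm)
      + sc (of_nat s) (nfall X (c - (x0 + of_int n * mm) / mm) N (s - 1)))
    = nfall X (c - (x0 + of_int n * mm) / mm) (Suc N) s"
    unfolding shift by (rule nfall_Suc)
qed (simp_all add: fall_XE nfall_def)

end

section \<open>The ladder coefficients a_p(s, .) and b_p(s, .)\<close>

lemma gbin_pascal: "gbin m (y + m) (Suc r) = gbin m y (Suc r) + m * gbin m y r"
proof (induct r)
  case 0 then show ?case by (simp add: gbin_def)
next
  case (Suc r)
  have "gbin m (y + m) (Suc (Suc r)) = gbin m (y + m) (Suc r) * (y + m - of_nat (Suc r) * m) / of_nat (Suc (Suc r))"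
    by (rule gbin_Suc)
  also have "\<dots> = (gbin m y (Suc r) + m * gbin m y r) * (y - of_nat r * m) / of_nat (Suc (Suc r))"
    by (simp only: Suc) (simp add: algebra_simps)
  also have "\<dots> = gbin m y (Suc (Suc r)) + m * gbin m y (Suc r)"
    unfolding gbin_Suc[of m y "Suc r"] gbin_Suc[of m y r]
    by (simp add: field_simps del: of_nat_Suc) (simp add: algebra_simps)
  finally show ?case .
qed

text \<open>Expanding (y - 2 g m) [y + m over r]_m in the basis [y over r - j]_m, j = 0, 1, 2;
  this is the three-term recursion behind the ladder coefficients.\<close>

lemma gbin_three_term:
  fixes y m g :: "'f::field_char_0"
  shows "(y - 2 * g * m) * gbin m (y + m) r =
     gbin m y r * (y - of_nat r * m - 2 * g * m)
   + (if 1 \<le> r then 2 * m * gbin m y (r - 1) * (y - g * m - (of_nat r - 1) * m) else 0)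
   + (if 2 \<le> r then m ^ 2 * gbin m y (r - 2) * (y - (of_nat r - 2) * m) else 0)"
proof (cases r)
  case 0 then show ?thesis by simp
next
  case (Suc r')
  show ?thesis
  proof (cases r')
    case 0 then show ?thesis using Suc by (simp add: gbin_def algebra_simps)
  next
    case (Suc r'')
    have r: "r = Suc (Suc r'')" using \<open>r = Suc r'\<close> Suc by simp
    have b1: "gbin m y (Suc r'') = gbin m y r'' * (y - of_nat r'' * m) / of_nat (Suc r'')"
      by (rule gbin_Suc)
    have b2: "gbin m y (Suc (Suc r'')) = gbin m y r'' * (y - of_nat r'' * m) / of_nat (Suc r'')
        * (y - of_nat (Suc r'') * m) / of_nat (Suc (Suc r''))"
      unfolding b1[symmetric] by (rule gbin_Suc)
    have p: "gbin m (y + m) r = gbin m y (Suc (Suc r'')) + m * gbin m y (Suc r'')"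
      unfolding r by (rule gbin_pascal)
    show ?thesis unfolding p unfolding r
      by (simp only: b2 b1 diff_Suc_1 diff_Suc_Suc minus_nat.diff_0 if_True)
        (simp add: field_simps del: of_nat_Suc, simp add: algebra_simps power2_eq_square)
  qed
qed

text \<open>The ladder coefficient for weight x and spin g; a_p(s,i) and b_p(s,k) are its instances
  g = 1 and g = 1/2 (see acoef_eq and bcoef_eq below).\<close>

definition ladder_coef :: "'f::field_char_0 \<Rightarrow> 'f \<Rightarrow> 'f \<Rightarrow> nat \<Rightarrow> nat \<Rightarrow> 'f" where
  "ladder_coef mm g x s p = (\<Sum>q\<le>p. (-1) ^ q * gbin mm (x + g * mm) q
      * gbin mm (x + (of_nat s - of_nat q - 1 - g) * mm) s
      * gbin mm (x + (of_nat s - of_nat q + g) * mm) (p - q))"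

lemma prod_lessThan_split: "(\<Prod>j<q + (k::nat). f j) = (\<Prod>j<q. f j) * (\<Prod>j<k. f (q + j))"
  by (induct k) (auto simp: mult.assoc)

lemma gbin_split:
  assumes "q \<le> P"
  shows "gbin m y q * gbin m (y - of_nat q * m) (P - q) = of_nat (P choose q) * gbin m y P"
proof -
  have P: "P = q + (P - q)" using assms by simp
  have "(\<Prod>j<P. y - of_nat j * m) = (\<Prod>j<q. y - of_nat j * m) * (\<Prod>j<P - q. y - of_nat q * m - of_nat j * m)"
    by (subst P, subst prod_lessThan_split) (simp add: algebra_simps)
  then show ?thesis unfolding gbin_def binomial_fact[OF assms] by (simp add: field_simps)
qed

lemma ladder_coef_0: "ladder_coef mm g x 0 P = (if P = 0 then 1 else 0)"
proof -
  have "ladder_coef mm g x 0 P = (\<Sum>q\<le>P. (-1) ^ q * of_nat (P choose q)) * gbin mm (x + g * mm) P"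
    unfolding ladder_coef_def sum_distrib_right
  proof (rule sum.cong[OF refl])
    fix q assume "q \<in> {..P}"
    then have q: "q \<le> P" by simp
    have e: "x + (of_nat 0 - of_nat q + g) * mm = (x + g * mm) - of_nat q * mm" by (simp add: algebra_simps)
    show "(-1) ^ q * gbin mm (x + g * mm) q * gbin mm (x + (of_nat 0 - of_nat q - 1 - g) * mm) 0 *
        gbin mm (x + (of_nat 0 - of_nat q + g) * mm) (P - q) = (-1) ^ q * of_nat (P choose q) * gbin mm (x + g * mm) P"
      unfolding e gbin_0 mult_1_right using gbin_split[OF q, of mm "x + g * mm"] by (simp add: mult.assoc)
  qed
  then show ?thesis by (cases "P = 0") (auto simp: choose_alternating_sum)
qed

lemma sum_if_le: "k \<le> (P::nat) \<Longrightarrow> (\<Sum>q\<le>P. (if k \<le> P - q then F q else 0)) = (\<Sum>q\<le>P - k. F q)"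
proof -
  assume k: "k \<le> P"
  have "{..P} \<inter> {q. k \<le> P - q} = {..P - k}" using k by auto
  then show ?thesis by (simp add: sum.If_cases)
qed

text \<open>The three-term recursion of the ladder coefficients in s; it mirrors the three terms
  of the ladder relation (Y) below.\<close>

lemma ladder_coef_Suc:
  fixes mm g x :: "'f::field_char_0"
  shows "of_nat (Suc s) * ladder_coef mm g x (Suc s) P =
     (x + (of_nat s - of_nat P) * mm - g * mm) * ladder_coef mm g x s P
   + (if 1 \<le> P then 2 * mm * (x + (of_nat s + 1 - of_nat P) * mm) * ladder_coef mm g x s (P - 1) else 0)
   + (if 2 \<le> P then mm ^ 2 * (x + (of_nat s + 2 - of_nat P) * mm + g * mm) * ladder_coef mm g x s (P - 2) else 0)"
proof -
  define W where "W q = (-1) ^ q * gbin mm (x + g * mm) q * gbin mm (x + (of_nat s - of_nat q - 1 - g) * mm) s" for q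
  define y where "y q = x + (of_nat s - of_nat q + g) * mm" for q
  define c1 where "c1 = x + (of_nat s - of_nat P) * mm - g * mm"
  define c2 where "c2 = 2 * mm * (x + (of_nat s + 1 - of_nat P) * mm)"
  define c3 where "c3 = mm ^ 2 * (x + (of_nat s + 2 - of_nat P) * mm + g * mm)"
  have acs: "ladder_coef mm g x s P' = (\<Sum>q\<le>P'. W q * gbin mm (y q) (P' - q))" for P'
    unfolding ladder_coef_def W_def y_def ..
  text \<open>Each summand of the left-hand side obeys the recursion, by gbin_three_term.\<close>
  have term_rec: "(-1) ^ q * gbin mm (x + g * mm) q * gbin mm (x + (of_nat (Suc s) - of_nat q - 1 - g) * mm) (Suc s)
      * gbin mm (x + (of_nat (Suc s) - of_nat q + g) * mm) (P - q) * of_nat (Suc s)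
    = c1 * (W q * gbin mm (y q) (P - q))
      + (if 1 \<le> P - q then c2 * (W q * gbin mm (y q) (P - 1 - q)) else 0)
      + (if 2 \<le> P - q then c3 * (W q * gbin mm (y q) (P - 2 - q)) else 0)" if q: "q \<le> P" for q
  proof -
    have a1: "x + (of_nat (Suc s) - of_nat q - 1 - g) * mm - mm = x + (of_nat s - of_nat q - 1 - g) * mm"
      by (simp add: algebra_simps)
    have a2: "x + (of_nat (Suc s) - of_nat q - 1 - g) * mm = y q - 2 * g * mm" by (simp add: y_def algebra_simps)
    have a3: "x + (of_nat (Suc s) - of_nat q + g) * mm = y q + mm" by (simp add: y_def algebra_simps)
    have b: "gbin mm (x + (of_nat (Suc s) - of_nat q - 1 - g) * mm) (Suc s) * of_nat (Suc s)
      = (y q - 2 * g * mm) * gbin mm (x + (of_nat s - of_nat q - 1 - g) * mm) s"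
      unfolding gbin_Suc'[of mm] a1 by (simp add: a2 del: of_nat_Suc)
    have oq: "of_nat (P - q) = (of_nat P - of_nat q :: 'f)" using q by simp
    have e1: "y q - of_nat (P - q) * mm - 2 * g * mm = c1" unfolding oq c1_def y_def by (simp add: algebra_simps)
    have d1: "P - q - 1 = P - 1 - q" "P - q - 2 = P - 2 - q" by auto
    have "(-1) ^ q * gbin mm (x + g * mm) q * gbin mm (x + (of_nat (Suc s) - of_nat q - 1 - g) * mm) (Suc s)
      * gbin mm (x + (of_nat (Suc s) - of_nat q + g) * mm) (P - q) * of_nat (Suc s)
      = (-1) ^ q * gbin mm (x + g * mm) q * (gbin mm (x + (of_nat (Suc s) - of_nat q - 1 - g) * mm) (Suc s)
          * of_nat (Suc s)) * gbin mm (y q + mm) (P - q)"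
      unfolding a3 by (simp only: mult_ac)
    also have "\<dots> = W q * ((y q - 2 * g * mm) * gbin mm (y q + mm) (P - q))"
      unfolding b W_def by (simp only: mult_ac)
    also have "\<dots> = W q * (gbin mm (y q) (P - q) * c1
        + (if 1 \<le> P - q then c2 * gbin mm (y q) (P - q - 1) else 0)
        + (if 2 \<le> P - q then c3 * gbin mm (y q) (P - q - 2) else 0))"
      using gbin_three_term[of "y q" g mm "P - q"] unfolding e1 unfolding c2_def c3_def y_def oq
      by (auto simp: algebra_simps simp del: of_nat_Suc)
    finally show ?thesis unfolding d1 by (simp add: algebra_simps)
  qed
  have "of_nat (Suc s) * ladder_coef mm g x (Suc s) P = (\<Sum>q\<le>P. c1 * (W q * gbin mm (y q) (P - q))
      + (if 1 \<le> P - q then c2 * (W q * gbin mm (y q) (P - 1 - q)) else 0)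
      + (if 2 \<le> P - q then c3 * (W q * gbin mm (y q) (P - 2 - q)) else 0))"
    unfolding ladder_coef_def sum_distrib_left
    by (rule sum.cong[OF refl], subst term_rec[symmetric]) (auto simp: mult.commute)
  also have "\<dots> = c1 * ladder_coef mm g x s P
      + (if 1 \<le> P then c2 * ladder_coef mm g x s (P - 1) else 0)
      + (if 2 \<le> P then c3 * ladder_coef mm g x s (P - 2) else 0)"
    unfolding sum.distrib acs sum_distrib_left
    by (cases "1 \<le> P"; cases "2 \<le> P") (auto simp: sum_if_le acs sum_distrib_left intro!: sum.neutral)
  finally show ?thesis unfolding c1_def c2_def c3_def .
qed

lemma ladder_coef_vanish: "2 * s < P \<Longrightarrow> ladder_coef mm g x s P = 0"
proof (induct s arbitrary: P)
  case 0 then show ?case by (simp add: ladder_coef_0)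
next
  case (Suc s)
  have "of_nat (Suc s) * ladder_coef mm g x (Suc s) P = 0"
    unfolding ladder_coef_Suc using Suc by simp
  then show ?case by (simp del: of_nat_Suc)
qed


section \<open>Iterated commutators with Y\<close>

definition ad :: "'a::ring_1 \<Rightarrow> 'a \<Rightarrow> 'a" where "ad Y W = Y * W - W * Y"

lemma mult_power_expand:
  fixes Z Y :: "'a::ring_1"
  shows "Z * Y ^ N = (\<Sum>s\<le>N. of_nat (N choose s) * (Y ^ (N - s) * ((\<lambda>W. W * Y - Y * W) ^^ s) Z))"
proof (induct N)
  case 0 then show ?case by simp
next
  case (Suc N)
  define D where "D = (\<lambda>W. W * Y - Y * W)"
  define A where "A s = Y ^ (Suc N - s) * (D ^^ s) Z" for s
  have IH: "Z * Y ^ N = (\<Sum>s\<le>N. of_nat (N choose s) * (Y ^ (N - s) * (D ^^ s) Z))"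
    using Suc by (simp add: D_def)
  have "Z * Y ^ Suc N = (Z * Y ^ N) * Y" by (simp only: power_Suc2 mult.assoc)
  also have "\<dots> = (\<Sum>s\<le>N. of_nat (N choose s) * (Y ^ (N - s) * ((D ^^ s) Z * Y)))"
    unfolding IH sum_distrib_right by (simp add: mult.assoc)
  also have "\<dots> = (\<Sum>s\<le>N. of_nat (N choose s) * A s) + (\<Sum>s\<le>N. of_nat (N choose s) * A (Suc s))"
  proof -
    have "(D ^^ s) Z * Y = Y * (D ^^ s) Z + (D ^^ Suc s) Z" for s by (simp add: D_def)
    moreover have "Y ^ (N - s) * Y = Y ^ (Suc N - s)" if "s \<le> N" for s
      using that by (simp add: power_Suc2[symmetric] Suc_diff_le)
    ultimately show ?thesis unfolding A_def sum.distrib[symmetric]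
      by (intro sum.cong refl) (auto simp: distrib_left distrib_right mult.assoc[symmetric])
  qed
  also have "(\<Sum>s\<le>N. of_nat (N choose s) * A s) = A 0 + (\<Sum>s\<le>N. of_nat (N choose Suc s) * A (Suc s))"
  proof -
    have "(\<Sum>s\<le>N. of_nat (N choose s) * A s) = (\<Sum>s\<le>Suc N. of_nat (N choose s) * A s)" by (simp add: binomial_eq_0)
    also have "\<dots> = A 0 + (\<Sum>s\<le>N. of_nat (N choose Suc s) * A (Suc s))"
      by (subst sum.atMost_Suc_shift) simp
    finally show ?thesis .
  qed
  also have "A 0 + (\<Sum>s\<le>N. of_nat (N choose Suc s) * A (Suc s)) + (\<Sum>s\<le>N. of_nat (N choose s) * A (Suc s))
     = (\<Sum>s\<le>Suc N. of_nat (Suc N choose s) * A s)"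
    by (subst sum.atMost_Suc_shift) (simp add: sum.distrib[symmetric] distrib_right add_ac)
  finally show ?case by (simp add: A_def D_def)
qed

lemma right_ad_iter:
  fixes Z Y :: "'a::ring_1"
  shows "((\<lambda>W. W * Y - Y * W) ^^ s) Z = (-1) ^ s * (ad Y ^^ s) Z"
proof (induct s)
  case (Suc s)
  have m1_comm: "(-1) ^ s * Y = Y * (-1) ^ s" by (cases "even s") simp_all
  show ?case
    using Suc by (simp add: ad_def right_diff_distrib mult.assoc[symmetric] m1_comm)
qed simp

lemma sum_index_shift1: "f 0 = 0 \<Longrightarrow> g (Suc M) = 0 \<Longrightarrow> (\<And>p. f (Suc p) = g p) \<Longrightarrow>
   (\<Sum>P\<le>Suc M. f P) = (\<Sum>p\<le>Suc M. (g p :: 'a::comm_monoid_add))"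
  by (simp only: sum.atMost_Suc_shift[of f] sum.atMost_Suc[of g]) simp

lemma sum_index_shift2: "f 0 = 0 \<Longrightarrow> f 1 = 0 \<Longrightarrow> g (Suc M) = 0 \<Longrightarrow> g (Suc (Suc M)) = 0 \<Longrightarrow>
   (\<And>p. f (Suc (Suc p)) = g p) \<Longrightarrow>
   (\<Sum>P\<le>Suc (Suc M). f P) = (\<Sum>p\<le>Suc (Suc M). (g p :: 'a::comm_monoid_add))"
  by (simp only: sum.atMost_Suc_shift[of f] sum.atMost_Suc_shift[of "\<lambda>i. f (Suc i)"] sum.atMost_Suc[of g]) simp

context central_scalars begin

lemma ad_sc: "ad Y (sc c W) = sc c (ad Y W)"
  by (simp add: ad_def sc_mult_left sc_mult_right sc_diff)

lemma ad_sum: "ad Y (sum f S) = (\<Sum>x\<in>S. ad Y (f x))"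
  by (simp add: ad_def sum_distrib_left sum_distrib_right sum_subtractf)

definition Y_ladder :: "'b \<Rightarrow> 'f \<Rightarrow> 'f \<Rightarrow> 'f \<Rightarrow> 'f \<Rightarrow> (int \<Rightarrow> 'b) \<Rightarrow> bool" where
  "Y_ladder Y \<alpha> \<gamma> mm x0 e \<longleftrightarrow> (\<forall>k. ad Y (e k) = sc (x0 + of_int k * mm - \<gamma> * mm) (e (k + 1))
      + sc (2 * \<alpha> * mm * (x0 + of_int k * mm)) (e k)
      + sc (\<alpha> ^ 2 * mm ^ 2 * (x0 + of_int k * mm + \<gamma> * mm)) (e (k - 1)))"

lemma Y_ladder_shift:
  assumes "Y_ladder Y \<alpha> \<gamma> mm x0 e"
  shows "Y_ladder Y \<alpha> \<gamma> mm (x0 - of_nat s * mm) (\<lambda>k. e (k - int s))"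
  unfolding Y_ladder_def
proof
  fix k
  have idx: "k - int s + 1 = k + 1 - int s" "k - int s - 1 = k - 1 - int s" by simp_all
  have w: "x0 + of_int (k - int s) * mm = x0 - of_nat s * mm + of_int k * mm"
    by (simp add: algebra_simps)
  show "ad Y (e (k - int s)) = sc (x0 - of_nat s * mm + of_int k * mm - \<gamma> * mm) (e (k + 1 - int s))
      + sc (2 * \<alpha> * mm * (x0 - of_nat s * mm + of_int k * mm)) (e (k - int s))
      + sc (\<alpha> ^ 2 * mm ^ 2 * (x0 - of_nat s * mm + of_int k * mm + \<gamma> * mm)) (e (k - 1 - int s))"
    using assms[unfolded Y_ladder_def, rule_format, of "k - int s"] unfolding idx w .
qed

text \<open>The closed form of ad_Y^s(e_0) / s!: the terms e_{s-p} weighted by alpha^p times the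
  ladder coefficients (which vanish for p > 2s, so any M \<ge> 2s may be used).\<close>

definition ladder_sum :: "'f \<Rightarrow> 'f \<Rightarrow> 'f \<Rightarrow> 'f \<Rightarrow> (int \<Rightarrow> 'b) \<Rightarrow> nat \<Rightarrow> nat \<Rightarrow> 'b" where
  "ladder_sum \<alpha> \<gamma> mm x0 e M s = (\<Sum>p\<le>M. sc (\<alpha> ^ p * ladder_coef mm \<gamma> x0 s p) (e (int s - int p)))"

lemma ad_ladder_sum:
  assumes hY: "Y_ladder Y \<alpha> \<gamma> mm x0 e" and M: "2 * Suc s \<le> M"
  shows "ad Y (ladder_sum \<alpha> \<gamma> mm x0 e M s) = sc (of_nat (Suc s)) (ladder_sum \<alpha> \<gamma> mm x0 e M (Suc s))"
proof -
  define M2 where "M2 = M - 2"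
  have M2: "M = Suc (Suc M2)" using M unfolding M2_def by arith
  have van: "ladder_coef mm \<gamma> x0 s P = 0" if "2 * s < P" for P using that by (rule ladder_coef_vanish)
  define T1 where "T1 p = sc (\<alpha> ^ p * ladder_coef mm \<gamma> x0 s p * (x0 + (of_nat s - of_nat p) * mm - \<gamma> * mm))
      (e (int (Suc s) - int p))" for p
  define T2 where "T2 p = sc (\<alpha> ^ p * ladder_coef mm \<gamma> x0 s p * (2 * \<alpha> * mm * (x0 + (of_nat s - of_nat p) * mm)))
      (e (int s - int p))" for p
  define T3 where "T3 p = sc (\<alpha> ^ p * ladder_coef mm \<gamma> x0 s p
      * (\<alpha> ^ 2 * mm ^ 2 * (x0 + (of_nat s - of_nat p) * mm + \<gamma> * mm))) (e (int s - int p - 1))" for p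
  text \<open>The three ladder terms of each summand, re-indexed so that they all multiply e_{s+1-P}.\<close>
  define U2 where "U2 P = sc (\<alpha> ^ P * (if 1 \<le> P then 2 * mm * (x0 + (of_nat s + 1 - of_nat P) * mm)
      * ladder_coef mm \<gamma> x0 s (P - 1) else 0)) (e (int (Suc s) - int P))" for P
  define U3 where "U3 P = sc (\<alpha> ^ P * (if 2 \<le> P then mm ^ 2 * (x0 + (of_nat s + 2 - of_nat P) * mm + \<gamma> * mm)
      * ladder_coef mm \<gamma> x0 s (P - 2) else 0)) (e (int (Suc s) - int P))" for P
  have "ad Y (ladder_sum \<alpha> \<gamma> mm x0 e M s) = (\<Sum>p\<le>M. T1 p + T2 p + T3 p)"
    unfolding ladder_sum_def ad_sum ad_sc
  proof (rule sum.cong[OF refl])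
    fix p
    have i: "int s - int p + 1 = int (Suc s) - int p" by simp
    have o: "(of_int (int s - int p) :: 'f) = of_nat s - of_nat p" by simp
    show "sc (\<alpha> ^ p * ladder_coef mm \<gamma> x0 s p) (ad Y (e (int s - int p))) = T1 p + T2 p + T3 p"
      using hY[unfolded Y_ladder_def, rule_format, of "int s - int p"]
      unfolding T1_def T2_def T3_def i o by (simp only: sc_add sc_sc)
  qed
  also have "(\<Sum>p\<le>M. T2 p) = (\<Sum>P\<le>M. U2 P)" unfolding M2
  proof (rule sum_index_shift1[symmetric])
    show "U2 0 = 0" by (simp add: U2_def)
    show "T2 (Suc (Suc M2)) = 0" using M M2 by (simp add: T2_def van)
    fix p show "U2 (Suc p) = T2 p" unfolding U2_def T2_def
      by (rule arg_cong2[where f=sc]) (simp_all add: algebra_simps)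
  qed
  moreover have "(\<Sum>p\<le>M. T3 p) = (\<Sum>P\<le>M. U3 P)" unfolding M2
  proof (rule sum_index_shift2[symmetric])
    show "U3 0 = 0" "U3 1 = 0" by (simp_all add: U3_def)
    show "T3 (Suc M2) = 0" "T3 (Suc (Suc M2)) = 0" using M M2 by (simp_all add: T3_def van)
    fix p show "U3 (Suc (Suc p)) = T3 p" unfolding U3_def T3_def
      by (rule arg_cong2[where f=sc]) (simp_all add: algebra_simps power2_eq_square)
  qed
  ultimately have "ad Y (ladder_sum \<alpha> \<gamma> mm x0 e M s) = (\<Sum>P\<le>M. T1 P + U2 P + U3 P)"
    by (simp add: sum.distrib)
  also have "\<dots> = (\<Sum>P\<le>M. sc (\<alpha> ^ P * (of_nat (Suc s) * ladder_coef mm \<gamma> x0 (Suc s) P)) (e (int (Suc s) - int P)))"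
    unfolding ladder_coef_Suc T1_def U2_def U3_def
    by (rule sum.cong[OF refl])
       (simp only: distrib_left sc_addc[symmetric] mult.assoc mult.commute[of "ladder_coef mm \<gamma> x0 s _"])
  also have "\<dots> = sc (of_nat (Suc s)) (ladder_sum \<alpha> \<gamma> mm x0 e M (Suc s))"
    by (simp add: ladder_sum_def sc_sum sc_sc algebra_simps del: of_nat_Suc)
  finally show ?thesis .
qed

lemma iterated_ad_Y:
  assumes hY: "Y_ladder Y \<alpha> \<gamma> mm x0 e"
  shows "2 * s \<le> M \<Longrightarrow> (ad Y ^^ s) (e 0) = sc (fact s) (ladder_sum \<alpha> \<gamma> mm x0 e M s)"
proof (induct s)
  case 0
  show ?case by (simp add: ladder_sum_def) (subst sum_atMost_single0, auto simp: ladder_coef_0)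
next
  case (Suc s)
  then show ?case
    by (simp add: ad_sc ad_ladder_sum[OF hY] sc_sc del: of_nat_Suc) (simp add: mult.commute)
qed

lemma ladder_mult_power:
  assumes hY: "Y_ladder Y \<alpha> \<gamma> mm x0 e"
  shows "e 0 * Y ^ N = (\<Sum>s\<le>N. sc (of_nat (N choose s) * (-1) ^ s * fact s)
      (Y ^ (N - s) * ladder_sum \<alpha> \<gamma> mm x0 e (2 * s) s))"
  unfolding mult_power_expand[of "e 0" Y N] right_ad_iter iterated_ad_Y[OF hY order.refl]
  by (rule sum.cong[OF refl])
     (simp add: of_nat_sc minus_one_power_sc sc_mult_left sc_sc mult.assoc mult.commute mult.left_commute)

end


lemma fps_tsum_nth:
  assumes "\<And>s. N < s \<Longrightarrow> f s $ N = 0"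
  shows "fps_tsum f $ N = (\<Sum>s\<le>N. f s $ N)"
proof -
  have "fps_tsum f $ N = (\<Sum>s\<in>{s. f s $ N \<noteq> 0}. f s $ N)" by (simp add: fps_tsum_def)
  also have "\<dots> = (\<Sum>s\<le>N. f s $ N)"
    by (rule sum.mono_neutral_left) (use assms not_le in auto)
  finally show ?thesis .
qed

lemma fps_monom_nth: "(fps_const (c::'a::ring_1) * fps_X ^ r) $ n = (if n = r then c else 0)"
  by (simp add: fps_X_power_mult_right_nth)

lemma fps_tsum_monom: "fps_tsum (\<lambda>r. fps_const (c r :: 'a::ring_1) * fps_X ^ r) $ n = c n"
proof -
  have "fps_tsum (\<lambda>r. fps_const (c r) * fps_X ^ r) $ n = (\<Sum>r\<le>n. (if n = r then c r else 0))"
    by (subst fps_tsum_nth, simp_all only: fps_monom_nth) auto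
  also have "\<dots> = c n" by (simp add: sum.delta')
  finally show ?thesis .
qed

lemma scaled_monom_nth:
  "(fps_const (c::'a::ring_1) * F * (fps_const d * fps_X ^ s)) $ N = (if s \<le> N then c * F $ (N - s) * d else 0)"
proof -
  have "fps_const c * F * (fps_const d * fps_X ^ s) = (fps_const c * F * fps_const d) * fps_X ^ s"
    by (simp add: mult.assoc)
  then show ?thesis by (simp add: fps_X_power_mult_right_nth not_less)
qed

lemma fps_tsum_scaled_monom_nth:
  "fps_tsum (\<lambda>s. fps_const (c s :: 'a::ring_1) * F s * (fps_const (d s) * fps_X ^ s)) $ N
    = (\<Sum>s\<le>N. c s * F s $ (N - s) * d s)"
  by (subst fps_tsum_nth) (simp_all add: scaled_monom_nth)

lemma tri_swap: "(\<Sum>n\<le>(N::nat). \<Sum>s\<le>N - n. h n s) = (\<Sum>s\<le>N. \<Sum>n\<le>N - s. (h n s :: 'a::comm_monoid_add))"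
proof -
  have a: "(\<Sum>s\<le>N - n. g s) = (\<Sum>s\<le>N. (if n + s \<le> N then g s else 0))" if "n \<le> N" for n and g :: "nat \<Rightarrow> 'a"
  proof -
    have "{..N} \<inter> {s. n + s \<le> N} = {..N - n}" using that by auto
    then show ?thesis by (simp add: sum.If_cases)
  qed
  have "(\<Sum>n\<le>N. \<Sum>s\<le>N - n. h n s) = (\<Sum>n\<le>N. \<Sum>s\<le>N. (if n + s \<le> N then h n s else 0))"
    by (rule sum.cong[OF refl]) (simp add: a)
  also have "\<dots> = (\<Sum>s\<le>N. \<Sum>n\<le>N. (if n + s \<le> N then h n s else 0))" by (rule sum.swap)
  also have "\<dots> = (\<Sum>s\<le>N. \<Sum>n\<le>N - s. h n s)"
    by (rule sum.cong[OF refl]) (simp add: a add.commute)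
  finally show ?thesis .
qed

lemma mult_double_tsum_nth:
  fixes A :: "'a::ring_1 fps"
  shows "(A * fps_tsum (\<lambda>s. fps_tsum (\<lambda>p. fps_const (Z s p) * fps_X ^ (s + p)))) $ N
    = (\<Sum>s\<le>N. \<Sum>p\<le>N - s. A $ (N - s - p) * Z s p)"
proof -
  have inner: "fps_tsum (\<lambda>p. fps_const (Z s p) * fps_X ^ (s + p)) $ K = (if s \<le> K then Z s (K - s) else 0)" for s K
  proof -
    have "fps_tsum (\<lambda>p. fps_const (Z s p) * fps_X ^ (s + p)) $ K = (\<Sum>p\<le>K. (if K = s + p then Z s p else 0))"
      by (subst fps_tsum_nth, simp_all only: fps_monom_nth) auto
    also have "\<dots> = (\<Sum>p\<le>K. (if p = K - s \<and> s \<le> K then Z s p else 0))"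
      by (rule sum.cong) auto
    finally show ?thesis by (simp add: sum.delta' cong: conj_cong)
  qed
  have outer: "fps_tsum (\<lambda>s. fps_tsum (\<lambda>p. fps_const (Z s p) * fps_X ^ (s + p))) $ K = (\<Sum>s\<le>K. Z s (K - s))" for K
    by (subst fps_tsum_nth) (auto simp: inner)
  have "(A * fps_tsum (\<lambda>s. fps_tsum (\<lambda>p. fps_const (Z s p) * fps_X ^ (s + p)))) $ N
     = (\<Sum>n\<le>N. \<Sum>s\<le>N - n. A $ n * Z s (N - n - s))"
    by (simp add: fps_mult_nth outer atLeast0AtMost sum_distrib_left diff_diff_eq)
  also have "\<dots> = (\<Sum>s\<le>N. \<Sum>n\<le>N - s. A $ n * Z s (N - n - s))"
    by (rule tri_swap)
  also have "\<dots> = (\<Sum>s\<le>N. \<Sum>p\<le>N - s. A $ (N - s - p) * Z s p)"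
  proof (rule sum.cong[OF refl])
    fix s
    show "(\<Sum>n\<le>N - s. A $ n * Z s (N - n - s)) = (\<Sum>p\<le>N - s. A $ (N - s - p) * Z s p)"
    proof (rule sum.reindex_bij_witness[where i="\<lambda>p. N - s - p" and j="\<lambda>p. N - s - p"])
      fix p assume "p \<in> {..N - s}"
      then have "N - s - (N - s - p) = p" by auto
      then show "A $ (N - s - (N - s - p)) * Z s (N - s - p) = A $ p * Z s (N - p - s)"
        by (simp add: add.commute)
    qed auto
  qed
  finally show ?thesis .
qed

context central_scalars begin

lemma Fser_nth:
  "Fser emb m \<alpha> L1 L2 a $ n = sc (1 / fact n) (rise (XE (Xel emb m \<alpha> L1) a) n) * Yel emb m \<alpha> L2 ^ n"
  unfolding Fser_def fps_tsum_monom by (simp add: sc_def XE_def)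

lemma user_nth:
  "user emb m \<alpha> L a $ n = sc ((-1) ^ n / fact n) (fall (XE (Xel emb m \<alpha> L) (- a)) n) * Yel emb m \<alpha> L ^ n"
  unfolding user_def fps_tsum_monom by (simp add: sc_def XE_def)


section \<open>Passing a weight family through F_a: identities (1) and (2)\<close>

lemma first_copy_through_F:
  fixes E :: "int \<Rightarrow> 'b"
  assumes m0: "(of_int m :: 'f) \<noteq> 0"
    and Xd: "X = Xel emb m \<alpha> L1" and Yd: "Y = Yel emb m \<alpha> L2"
    and eX: "X_shift X \<alpha> \<gamma> (of_int m) x0 (\<lambda>k. E (j + k * m))"
    and EY: "\<And>k. E k * Y = Y * E k"
  shows "fps_const (E j) * Fser emb m \<alpha> L1 L2 a = fps_tsum (\<lambda>s. fps_const (emb (kappa \<alpha> \<gamma> (of_int m) x0 s))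
     * Fser emb m \<alpha> L1 L2 (a - x0 / of_int m + of_nat s) * (fps_const (E (j - int s * m) * Y ^ s) * fps_X ^ s))"
proof (rule fps_ext)
  fix N
  define e where "e k = E (j + k * m)" for k
  have moved: "e 0 * sc (1 / fact N) (rise (XE X a) N)
     = (\<Sum>s\<le>N. sc (kappa \<alpha> \<gamma> (of_int m) x0 s) (nrise X (a - x0 / of_int m + of_nat s) N s * e (- int s)))"
    using move_through_rise[OF m0 eX[folded e_def], of 0 N a] by simp
  have lhs: "(fps_const (E j) * Fser emb m \<alpha> L1 L2 a) $ N = (e 0 * sc (1 / fact N) (rise (XE X a) N)) * Y ^ N"
    by (simp add: Fser_nth Xd Yd e_def mult.assoc)
  have term_s: "emb (kappa \<alpha> \<gamma> (of_int m) x0 s) * Fser emb m \<alpha> L1 L2 (a - x0 / of_int m + of_nat s) $ (N - s)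
       * (E (j - int s * m) * Y ^ s)
     = sc (kappa \<alpha> \<gamma> (of_int m) x0 s) (nrise X (a - x0 / of_int m + of_nat s) N s * e (- int s)) * Y ^ N"
    if sN: "s \<le> N" for s
  proof -
    have ey: "Y ^ (N - s) * (E (j - int s * m) * Z) = E (j - int s * m) * (Y ^ (N - s) * Z)" for Z
      using comm_pow[OF EY, of "j - int s * m" "N - s"] by (simp add: mult.assoc[symmetric])
    have yy: "Y ^ (N - s) * Y ^ s = Y ^ N" using sN by (simp add: power_add[symmetric])
    show ?thesis unfolding Fser_nth Xd[symmetric] Yd[symmetric] using sN
      by (simp add: nrise_def e_def sc_normalise mult.assoc ey yy)
  qed
  show "(fps_const (E j) * Fser emb m \<alpha> L1 L2 a) $ N = fps_tsum (\<lambda>s. fps_const (emb (kappa \<alpha> \<gamma> (of_int m) x0 s))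
     * Fser emb m \<alpha> L1 L2 (a - x0 / of_int m + of_nat s) * (fps_const (E (j - int s * m) * Y ^ s) * fps_X ^ s)) $ N"
    unfolding lhs moved fps_tsum_scaled_monom_nth sum_distrib_right by (rule sum.cong) (simp_all add: term_s)
qed


section \<open>Passing a ladder family through F_a: identities (3) and (4)\<close>

text \<open>If e_k = E_{j+km} lies in the second factor, satisfies (Y) and commutes with X, then
  E_j F_a is computed from E_j Y^N (lemma ladder_mult_power), coefficient by coefficient.\<close>

lemma second_copy_through_F:
  fixes E :: "int \<Rightarrow> 'b"
  assumes Xd: "X = Xel emb m \<alpha> L1" and Yd: "Y = Yel emb m \<alpha> L2"
    and hY: "Y_ladder Y \<alpha> \<gamma> (of_int m) x0 (\<lambda>k. E (j + k * m))"
    and EX: "\<And>k. E k * X = X * E k" and XY: "X * Y = Y * X"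
  shows "fps_const (E j) * Fser emb m \<alpha> L1 L2 a = fps_tsum (\<lambda>s. fps_const (emb ((-1) ^ s)) * Fser emb m \<alpha> L1 L2 (a + of_nat s)
     * (fps_const (\<Sum>p\<le>2 * s. emb (\<alpha> ^ p * ladder_coef (of_int m) \<gamma> x0 s p) * rise (X + emb a) s
          * E (j + (int s - int p) * m)) * fps_X ^ s))"
proof (rule fps_ext)
  fix N
  define e where "e k = E (j + k * m)" for k
  define C where "C s = ladder_sum \<alpha> \<gamma> (of_int m) x0 e (2 * s) s" for s
  have Erise: "E j * rise (XE X a) N = rise (XE X a) N * E j"
    by (rule rise_comm) (rule comm_XE[OF EX])
  have Yrise: "Y * rise (XE X a) s = rise (XE X a) s * Y" for s
    by (rule rise_comm) (rule comm_XE, simp add: XY)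
  have Ypow_rise: "Y ^ k * rise (XE X a) s = rise (XE X a) s * Y ^ k" for k s
    by (rule comm_pow[symmetric]) (rule Yrise[symmetric])
  have lhs: "(fps_const (E j) * Fser emb m \<alpha> L1 L2 a) $ N
     = (\<Sum>s\<le>N. sc (of_nat (N choose s) * (-1) ^ s * fact s / fact N) (rise (XE X a) N * (Y ^ (N - s) * C s)))"
  proof -
    have "(fps_const (E j) * Fser emb m \<alpha> L1 L2 a) $ N = sc (1 / fact N) (rise (XE X a) N * (e 0 * Y ^ N))"
      by (simp add: Fser_nth Xd[symmetric] Yd[symmetric] e_def sc_mult_left mult.assoc[symmetric] Erise sc_mult_right)
    then show ?thesis
      unfolding ladder_mult_power[OF hY[folded e_def]] C_def
      by (simp add: sum_distrib_left sc_sum sc_mult_left sc_sc mult.commute)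
  qed
  have term_s: "emb ((-1) ^ s) * Fser emb m \<alpha> L1 L2 (a + of_nat s) $ (N - s)
       * (\<Sum>p\<le>2 * s. emb (\<alpha> ^ p * ladder_coef (of_int m) \<gamma> x0 s p) * rise (X + emb a) s * E (j + (int s - int p) * m))
     = sc ((-1) ^ s / fact (N - s)) (rise (XE X a) N * (Y ^ (N - s) * C s))" if sN: "s \<le> N" for s
  proof -
    have Cs: "(\<Sum>p\<le>2 * s. emb (\<alpha> ^ p * ladder_coef (of_int m) \<gamma> x0 s p) * rise (X + emb a) s * E (j + (int s - int p) * m))
        = rise (XE X a) s * C s"
      unfolding C_def ladder_sum_def e_def XE_def sum_distrib_left
      by (rule sum.cong[OF refl]) (simp add: emb_mult_sc sc_mult_left sc_mult_right)
    have rr: "rise (XE X (a + of_nat s)) (N - s) * rise (XE X a) s = rise (XE X a) N"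
    proof -
      have "rise (XE X a) N = rise (XE X a) (s + (N - s))" using sN by simp
      also have "\<dots> = rise (XE X a) s * rise (XE X (a + of_nat s)) (N - s)"
        by (simp add: rise_add XE_add_nat)
      finally show ?thesis by (simp add: rise_rise_comm)
    qed
    have yr: "Y ^ (N - s) * (rise (XE X a) s * C s) = rise (XE X a) s * (Y ^ (N - s) * C s)"
      by (simp add: mult.assoc[symmetric] Ypow_rise)
    have "emb ((-1) ^ s) * Fser emb m \<alpha> L1 L2 (a + of_nat s) $ (N - s) * (rise (XE X a) s * C s)
       = sc ((-1) ^ s / fact (N - s)) (rise (XE X (a + of_nat s)) (N - s) * (Y ^ (N - s) * (rise (XE X a) s * C s)))"
      unfolding Fser_nth Xd[symmetric] Yd[symmetric] by (simp add: sc_normalise mult.assoc)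
    also have "\<dots> = sc ((-1) ^ s / fact (N - s)) ((rise (XE X (a + of_nat s)) (N - s) * rise (XE X a) s) * (Y ^ (N - s) * C s))"
      by (simp add: yr mult.assoc)
    finally have "emb ((-1) ^ s) * Fser emb m \<alpha> L1 L2 (a + of_nat s) $ (N - s) * (rise (XE X a) s * C s)
       = sc ((-1) ^ s / fact (N - s)) ((rise (XE X (a + of_nat s)) (N - s) * rise (XE X a) s) * (Y ^ (N - s) * C s))" .
    then show ?thesis unfolding Cs rr .
  qed
  show "(fps_const (E j) * Fser emb m \<alpha> L1 L2 a) $ N = fps_tsum (\<lambda>s. fps_const (emb ((-1) ^ s))
     * Fser emb m \<alpha> L1 L2 (a + of_nat s) * (fps_const (\<Sum>p\<le>2 * s. emb (\<alpha> ^ p * ladder_coef (of_int m) \<gamma> x0 s p)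
       * rise (X + emb a) s * E (j + (int s - int p) * m)) * fps_X ^ s)) $ N"
    unfolding lhs fps_tsum_scaled_monom_nth
  proof (rule sum.cong[OF refl])
    fix s assume "s \<in> {..N}"
    then have sN: "s \<le> N" by simp
    have "of_nat (N choose s) * (-1) ^ s * fact s / fact N = ((-1) ^ s / fact (N - s) :: 'f)"
      unfolding binomial_fact[OF sN] by (simp add: field_simps)
    then show "sc (of_nat (N choose s) * (-1) ^ s * fact s / fact N) (rise (XE X a) N * (Y ^ (N - s) * C s))
      = emb ((-1) ^ s) * Fser emb m \<alpha> L1 L2 (a + of_nat s) $ (N - s)
       * (\<Sum>p\<le>2 * s. emb (\<alpha> ^ p * ladder_coef (of_int m) \<gamma> x0 s p) * rise (X + emb a) s * E (j + (int s - int p) * m))"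
      unfolding term_s[OF sN] by simp
  qed
qed


section \<open>Passing a weight family through u_a: identities (5) and (6)\<close>

lemma shifted_ladder_mult_power:
  assumes "Y_ladder Y \<alpha> \<gamma> mm x0 e"
  shows "e (- int s) * Y ^ N = (\<Sum>p\<le>N. sc (of_nat (N choose p) * (-1) ^ p * fact p)
      (Y ^ (N - p) * ladder_sum \<alpha> \<gamma> mm (x0 - of_nat s * mm) (\<lambda>k. e (k - int s)) (2 * p) p))"
  using ladder_mult_power[OF Y_ladder_shift[OF assms, of s], of N] by simp

text \<open>For identities (5), (6) everything lives in one algebra: e_k = E_{j+km} satisfies (X) and
  (Y) and Y X = (X - 1) Y.  Both sides then have the same t^N-coefficient, a double sum over
  the number s of lowering steps (from moving E_j through the falling factorial) and the
  number p of commutators with Y; u_term is its (s, p) summand.\<close>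

definition u_term :: "'b \<Rightarrow> 'b \<Rightarrow> 'f \<Rightarrow> 'f \<Rightarrow> 'f \<Rightarrow> 'f \<Rightarrow> (int \<Rightarrow> 'b) \<Rightarrow> 'f \<Rightarrow> nat \<Rightarrow> nat \<Rightarrow> nat \<Rightarrow> 'b" where
  "u_term X Y \<alpha> \<gamma> mm x0 e c N s p = sc ((-1) ^ (N - s - p + s) * kappa \<alpha> \<gamma> mm x0 s / fact (N - s - p))
     (fall (XE X c) (N - s) * (Y ^ (N - s - p)
        * ladder_sum \<alpha> \<gamma> mm (x0 - of_nat s * mm) (\<lambda>k. e (k - int s)) (2 * p) p * Y ^ s))"

lemma user_left_coeff:
  fixes E :: "int \<Rightarrow> 'b"
  assumes m0: "(of_int m :: 'f) \<noteq> 0"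
    and Xd: "X = Xel emb m \<alpha> L1" and Yd: "Y = Yel emb m \<alpha> L1"
    and eX: "X_shift X \<alpha> \<gamma> (of_int m) x0 (\<lambda>k. E (j + k * m))"
    and hY: "Y_ladder Y \<alpha> \<gamma> (of_int m) x0 (\<lambda>k. E (j + k * m))"
  shows "(fps_const (E j) * user emb m \<alpha> L1 a) $ N
    = (\<Sum>s\<le>N. \<Sum>p\<le>N - s. u_term X Y \<alpha> \<gamma> (of_int m) x0 (\<lambda>k. E (j + k * m)) (- a - x0 / of_int m) N s p)"
proof -
  define e where "e k = E (j + k * m)" for k
  define c where "c = - a - x0 / of_int m"
  have moved: "e 0 * sc (1 / fact N) (fall (XE X (- a)) N)
      = (\<Sum>s\<le>N. sc (kappa \<alpha> \<gamma> (of_int m) x0 s) (nfall X c N s * e (- int s)))"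
    using move_through_fall[OF m0 eX[folded e_def], of 0 N "- a"] by (simp add: c_def)
  have "(fps_const (E j) * user emb m \<alpha> L1 a) $ N
      = sc ((-1) ^ N) ((e 0 * sc (1 / fact N) (fall (XE X (- a)) N)) * Y ^ N)"
    by (simp add: user_nth Xd[symmetric] Yd[symmetric] e_def sc_mult_left sc_mult_right sc_sc mult.assoc)
  also have "\<dots> = (\<Sum>s\<le>N. sc ((-1) ^ N * kappa \<alpha> \<gamma> (of_int m) x0 s / fact (N - s))
      (fall (XE X c) (N - s) * (e (- int s) * Y ^ N)))"
    unfolding moved sum_distrib_right sc_sum
    by (rule sum.cong[OF refl]) (simp add: nfall_def sc_mult_right sc_sc mult.assoc)
  also have "\<dots> = (\<Sum>s\<le>N. \<Sum>p\<le>N - s. u_term X Y \<alpha> \<gamma> (of_int m) x0 e c N s p)"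
  proof (rule sum.cong[OF refl])
    fix s assume "s \<in> {..N}" then have sN: "s \<le> N" by simp
    define C where "C p = ladder_sum \<alpha> \<gamma> (of_int m) (x0 - of_nat s * of_int m) (\<lambda>k. e (k - int s)) (2 * p) p" for p
    have "e (- int s) * Y ^ N = (e (- int s) * Y ^ (N - s)) * Y ^ s"
      using sN by (simp add: mult.assoc power_add[symmetric])
    also have "\<dots> = (\<Sum>p\<le>N - s. sc (of_nat (N - s choose p) * (-1) ^ p * fact p) (Y ^ (N - s - p) * C p * Y ^ s))"
      unfolding shifted_ladder_mult_power[OF hY[folded e_def]] C_def
      by (simp add: sum_distrib_right sc_mult_right)
    finally have expanded: "e (- int s) * Y ^ N = \<dots>" .
    have coeff: "(-1) ^ N * kappa \<alpha> \<gamma> (of_int m) x0 s / fact (N - s) * (of_nat (N - s choose p) * (-1) ^ p * fact p)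
        = (-1) ^ (N - s - p + s) * kappa \<alpha> \<gamma> (of_int m) x0 s / fact (N - s - p)" if pN: "p \<le> N - s" for p
    proof -
      have N: "N = (N - s - p) + s + p" using sN pN by simp
      have "(-1::'f) ^ N * (-1) ^ p = (-1) ^ (N - s - p + s)"
        by (subst N) (simp add: power_add mult.assoc)
      then show ?thesis unfolding binomial_fact[OF pN] by (simp add: field_simps)
    qed
    show "sc ((-1) ^ N * kappa \<alpha> \<gamma> (of_int m) x0 s / fact (N - s)) (fall (XE X c) (N - s) * (e (- int s) * Y ^ N))
        = (\<Sum>p\<le>N - s. u_term X Y \<alpha> \<gamma> (of_int m) x0 e c N s p)"
      unfolding expanded sum_distrib_left sc_sum u_term_def C_def
      by (rule sum.cong[OF refl]) (simp only: sc_mult_left sc_sc coeff atMost_iff)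
  qed
  finally show ?thesis unfolding e_def[abs_def] c_def .
qed

lemma user_right_coeff:
  fixes E :: "int \<Rightarrow> 'b"
  assumes Xd: "X = Xel emb m \<alpha> L1" and Yd: "Y = Yel emb m \<alpha> L1"
    and YX: "Y * X = XE X (-1) * Y"
  shows "(user emb m \<alpha> L1 (a + x0 / of_int m) * fps_tsum (\<lambda>s. fps_tsum (\<lambda>p. fps_const (\<Sum>q\<le>2 * p.
          emb ((-1) ^ s * kappa \<alpha> \<gamma> (of_int m) x0 s * \<alpha> ^ q * ladder_coef (of_int m) \<gamma> (x0 - of_nat s * of_int m) p q)
          * fall (X + emb (- a - x0 / of_int m)) p * E (j + (int p - int s - int q) * m) * Y ^ s) * fps_X ^ (s + p)))) $ N
    = (\<Sum>s\<le>N. \<Sum>p\<le>N - s. u_term X Y \<alpha> \<gamma> (of_int m) x0 (\<lambda>k. E (j + k * m)) (- a - x0 / of_int m) N s p)"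
    (is "(_ * fps_tsum (\<lambda>s. fps_tsum (\<lambda>p. fps_const (?Z s p) * fps_X ^ (s + p)))) $ N = _")
  unfolding mult_double_tsum_nth
proof (intro sum.cong refl)
  fix s p assume "s \<in> {..N}" "p \<in> {..N - s}"
  then have sN: "s \<le> N" and pN: "p \<le> N - s" by auto
  define c where "c = - a - x0 / of_int m"
  define C where "C = ladder_sum \<alpha> \<gamma> (of_int m) (x0 - of_nat s * of_int m) (\<lambda>k. E (j + (k - int s) * m)) (2 * p) p"
  define n where "n = N - s - p"
  have np: "n + p = N - s" using sN pN by (simp add: n_def)
  have ff: "fall (XE X c) n * fall (XE X (c - of_nat n)) p = fall (XE X c) (N - s)"
    unfolding np[symmetric] fall_add XE_diff_nat ..
  have Zs: "?Z s p = sc ((-1) ^ s * kappa \<alpha> \<gamma> (of_int m) x0 s) (fall (XE X c) p * (C * Y ^ s))"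
    unfolding C_def ladder_sum_def c_def XE_def sum_distrib_left sum_distrib_right sc_sum
    by (rule sum.cong[OF refl]) (simp add: emb_mult_sc sc_mult_left sc_mult_right sc_sc mult.assoc algebra_simps)
  have "user emb m \<alpha> L1 (a + x0 / of_int m) $ n * ?Z s p
     = sc ((-1) ^ n / fact n * ((-1) ^ s * kappa \<alpha> \<gamma> (of_int m) x0 s))
         (fall (XE X c) n * (Y ^ n * fall (XE X c) p) * (C * Y ^ s))"
    unfolding user_nth Xd[symmetric] Yd[symmetric] Zs
    by (simp add: c_def sc_mult_left sc_mult_right sc_sc mult.assoc mult.commute mult.left_commute)
  also have "\<dots> = sc ((-1) ^ n / fact n * ((-1) ^ s * kappa \<alpha> \<gamma> (of_int m) x0 s))
         (fall (XE X c) (N - s) * (Y ^ n * C * Y ^ s))"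
    unfolding Ypow_fall[OF YX] ff[symmetric] by (simp add: mult.assoc)
  also have "(-1) ^ n / fact n * ((-1) ^ s * kappa \<alpha> \<gamma> (of_int m) x0 s)
      = (-1) ^ (N - s - p + s) * kappa \<alpha> \<gamma> (of_int m) x0 s / fact (N - s - p)"
    unfolding n_def by (simp add: power_add field_simps)
  finally show "user emb m \<alpha> L1 (a + x0 / of_int m) $ (N - s - p) * ?Z s p
      = u_term X Y \<alpha> \<gamma> (of_int m) x0 (\<lambda>k. E (j + k * m)) (- a - x0 / of_int m) N s p"
    unfolding u_term_def n_def c_def C_def .
qed

lemma through_u:
  fixes E :: "int \<Rightarrow> 'b"
  assumes m0: "(of_int m :: 'f) \<noteq> 0"
    and Xd: "X = Xel emb m \<alpha> L1" and Yd: "Y = Yel emb m \<alpha> L1"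
    and eX: "X_shift X \<alpha> \<gamma> (of_int m) x0 (\<lambda>k. E (j + k * m))"
    and hY: "Y_ladder Y \<alpha> \<gamma> (of_int m) x0 (\<lambda>k. E (j + k * m))"
    and YX: "Y * X = XE X (-1) * Y"
  shows "fps_const (E j) * user emb m \<alpha> L1 a = user emb m \<alpha> L1 (a + x0 / of_int m) *
      fps_tsum (\<lambda>s. fps_tsum (\<lambda>p. fps_const (\<Sum>q\<le>2 * p.
          emb ((-1) ^ s * kappa \<alpha> \<gamma> (of_int m) x0 s * \<alpha> ^ q * ladder_coef (of_int m) \<gamma> (x0 - of_nat s * of_int m) p q)
          * fall (X + emb (- a - x0 / of_int m)) p * E (j + (int p - int s - int q) * m) * Y ^ s) * fps_X ^ (s + p)))"
  by (rule fps_ext) (simp only: user_left_coeff[OF m0 Xd Yd eX hY] user_right_coeff[OF Xd Yd YX])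


section \<open>Weight families of the super-Virasoro relations\<close>

definition weight_family :: "(int \<Rightarrow> 'b) \<Rightarrow> 'f \<Rightarrow> 'f \<Rightarrow> (int \<Rightarrow> 'b) \<Rightarrow> bool" where
  "weight_family L w0 \<gamma> e \<longleftrightarrow> (\<forall>i j. ad (L i) (e j) = sc (w0 + of_int j - \<gamma> * of_int i) (e (i + j)))"

lemma svir_weight_families:
  assumes "svir_rel emb eps2 L G"
  shows "weight_family L 0 1 L" and "weight_family L (of_int eps2 / 2) (1 / 2) G"
proof -
  have LL: "L i * L j - L j * L i = emb (of_int j - of_int i) * L (i + j)"
    and LG: "L i * G j - G j * L i = emb (of_int j + of_int eps2 / 2 - of_int i / 2) * G (i + j)" for i j
    using assms unfolding svir_rel_def by blast+
  have wL: "0 + of_int j - 1 * of_int i = (of_int j - of_int i :: 'f)"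
    and wG: "of_int eps2 / 2 + of_int j - 1 / 2 * of_int i = (of_int j + of_int eps2 / 2 - of_int i / 2 :: 'f)"
    for i j by simp_all
  show "weight_family L 0 1 L" "weight_family L (of_int eps2 / 2) (1 / 2) G"
    unfolding weight_family_def ad_def sc_def wL wG using LL LG by blast+
qed

lemma weight_family_brackets:
  fixes j n m :: int
  assumes "weight_family L w0 \<gamma> e"
  shows "ad (L 0) (e (j + n * m)) = sc (w0 + of_int j + of_int n * of_int m) (e (j + n * m))"
    and "ad (L (- m)) (e (j + n * m))
      = sc (w0 + of_int j + of_int n * of_int m + \<gamma> * of_int m) (e (j + (n - 1) * m))"
    and "ad (L m) (e (j + n * m))
      = sc (w0 + of_int j + of_int n * of_int m - \<gamma> * of_int m) (e (j + (n + 1) * m))"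
proof -
  have wf: "ad (L i) (e j') = sc (w0 + of_int j' - \<gamma> * of_int i) (e (i + j'))" for i j'
    using assms unfolding weight_family_def by blast
  show "ad (L 0) (e (j + n * m)) = sc (w0 + of_int j + of_int n * of_int m) (e (j + n * m))"
    using wf[of 0 "j + n * m"] by (simp add: add.assoc)
  have "- m + (j + n * m) = j + (n - 1) * m" by (simp add: algebra_simps)
  then show "ad (L (- m)) (e (j + n * m))
      = sc (w0 + of_int j + of_int n * of_int m + \<gamma> * of_int m) (e (j + (n - 1) * m))"
    using wf[of "- m" "j + n * m"] by (simp add: algebra_simps)
  have "m + (j + n * m) = j + (n + 1) * m" by (simp add: algebra_simps)
  then show "ad (L m) (e (j + n * m))
      = sc (w0 + of_int j + of_int n * of_int m - \<gamma> * of_int m) (e (j + (n + 1) * m))"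
    using wf[of m "j + n * m"] by (simp add: algebra_simps)
qed

lemma Xel_sc: "Xel emb m \<alpha> L = sc (1 / of_int m) (L 0 + sc (\<alpha> * of_int m) (L (- m)))"
  by (simp add: Xel_def sc_def)

lemma Yel_sc: "Yel emb m \<alpha> L = L m + sc (2 * \<alpha> * of_int m) (L 0) + sc (\<alpha> ^ 2 * of_int m ^ 2) (L (- m))"
  by (simp add: Yel_def sc_def)

lemma weight_family_X_shift:
  assumes wf: "weight_family L w0 \<gamma> e" and m0: "(of_int m :: 'f) \<noteq> 0" and x0: "x0 = w0 + of_int j"
  shows "X_shift (Xel emb m \<alpha> L) \<alpha> \<gamma> (of_int m) x0 (\<lambda>n. e (j + n * m))"
  unfolding X_shift_def
proof
  fix n
  define x where "x = x0 + of_int n * of_int m"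
  define X where "X = Xel emb m \<alpha> L"
  note br = weight_family_brackets[OF wf, where j=j and n=n and m=m, folded x0, folded x_def]
  have a: "e (j + n * m) * L 0 = L 0 * e (j + n * m) - sc x (e (j + n * m))"
    using br(1) by (simp add: ad_def algebra_simps)
  have b: "e (j + n * m) * L (- m) = L (- m) * e (j + n * m) - sc (x + \<gamma> * of_int m) (e (j + (n - 1) * m))"
    using br(2) by (simp add: ad_def algebra_simps)
  have "e (j + n * m) * X = sc (1 / of_int m) (L 0 * e (j + n * m) - sc x (e (j + n * m))
      + sc (\<alpha> * of_int m) (L (- m) * e (j + n * m) - sc (x + \<gamma> * of_int m) (e (j + (n - 1) * m))))"
    unfolding X_def Xel_sc by (simp add: sc_mult_left distrib_left a b)
  also have "\<dots> = X * e (j + n * m) - sc (x / of_int m) (e (j + n * m))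
      - sc (\<alpha> * (x + \<gamma> * of_int m)) (e (j + (n - 1) * m))"
    unfolding X_def Xel_sc using m0
    by (simp add: sc_add sc_diff sc_sc sc_mult_right distrib_right algebra_simps)
  also have "X * e (j + n * m) - sc (x / of_int m) (e (j + n * m)) = XE X (- (x / of_int m)) * e (j + n * m)"
    by (simp add: XE_def distrib_right left_diff_distrib sc_def)
  finally show "e (j + n * m) * X = XE X (- ((x0 + of_int n * of_int m) / of_int m)) * e (j + n * m)
      - sc (\<alpha> * (x0 + of_int n * of_int m + \<gamma> * of_int m)) (e (j + (n - 1) * m))"
    unfolding x_def .
qed

lemma weight_family_Y_ladder:
  assumes wf: "weight_family L w0 \<gamma> e" and x0: "x0 = w0 + of_int j"
  shows "Y_ladder (Yel emb m \<alpha> L) \<alpha> \<gamma> (of_int m) x0 (\<lambda>n. e (j + n * m))"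
  unfolding Y_ladder_def
proof
  fix n
  note br = weight_family_brackets[OF wf, where j=j and n=n and m=m, folded x0]
  have "ad (Yel emb m \<alpha> L) (e (j + n * m)) = ad (L m) (e (j + n * m))
      + sc (2 * \<alpha> * of_int m) (ad (L 0) (e (j + n * m))) + sc (\<alpha> ^ 2 * of_int m ^ 2) (ad (L (- m)) (e (j + n * m)))"
    unfolding Yel_sc ad_def
    by (simp add: distrib_left distrib_right sc_mult_left sc_mult_right sc_diff algebra_simps)
  then show "ad (Yel emb m \<alpha> L) (e (j + n * m))
      = sc (x0 + of_int n * of_int m - \<gamma> * of_int m) (e (j + (n + 1) * m))
      + sc (2 * \<alpha> * of_int m * (x0 + of_int n * of_int m)) (e (j + n * m))
      + sc (\<alpha> ^ 2 * of_int m ^ 2 * (x0 + of_int n * of_int m + \<gamma> * of_int m)) (e (j + (n - 1) * m))"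
    unfolding br by (simp add: sc_sc mult.assoc)
qed

lemma Yel_Xel:
  assumes m0: "(of_int m :: 'f) \<noteq> 0" and wf: "weight_family L 0 1 L"
  shows "Yel emb m \<alpha> L * Xel emb m \<alpha> L = XE (Xel emb m \<alpha> L) (-1) * Yel emb m \<alpha> L"
proof -
  have c: "L i * L j = L j * L i + sc (of_int j - of_int i) (L (i + j))" for i j
  proof -
    have "ad (L i) (L j) = sc (0 + of_int j - 1 * of_int i) (L (i + j))"
      using wf unfolding weight_family_def by blast
    then show ?thesis by (simp add: ad_def algebra_simps)
  qed
  define A where "A = L (- m)" define B where "B = L 0" define C where "C = L m"
  have cBA: "B * A = A * B + sc (- of_int m) A" using c[of 0 "- m"] by (simp add: A_def B_def)
  have cCA: "C * A = A * C + sc (- 2 * of_int m) B" using c[of m "- m"] by (simp add: A_def B_def C_def)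
  have cCB: "C * B = B * C + sc (- of_int m) C" using c[of m 0] by (simp add: B_def C_def)
  have e1: "C * B - B * C = sc (- of_int m) C" using cCB by simp
  have e2: "C * A - A * C = sc (- 2 * of_int m) B" using cCA by simp
  have e3: "B * A - A * B = sc (- of_int m) A" using cBA by simp
  have e4: "A * B - B * A = sc (of_int m) A" using cBA by (simp add: sc_uminus)
  have X: "Xel emb m \<alpha> L = sc (1 / of_int m) (B + sc (\<alpha> * of_int m) A)" unfolding Xel_sc A_def B_def ..
  have Y: "Yel emb m \<alpha> L = C + sc (2 * \<alpha> * of_int m) B + sc (\<alpha> ^ 2 * of_int m ^ 2) A"
    unfolding Yel_sc A_def B_def C_def ..
  have "Yel emb m \<alpha> L * Xel emb m \<alpha> L - Xel emb m \<alpha> L * Yel emb m \<alpha> L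
      = sc (1 / of_int m) ((C * B - B * C) + sc (\<alpha> * of_int m) (C * A - A * C)
         + sc (2 * \<alpha> * of_int m * (\<alpha> * of_int m)) (B * A - A * B) + sc (\<alpha> ^ 2 * of_int m ^ 2) (A * B - B * A))"
    unfolding X Y
    by (simp add: distrib_left distrib_right sc_mult_left sc_mult_right sc_sc sc_add sc_diff algebra_simps)
  also have "\<dots> = sc (1 / of_int m * - of_int m) C + sc (1 / of_int m * (\<alpha> * of_int m * (- 2 * of_int m))) B
      + sc (1 / of_int m * (2 * \<alpha> * of_int m * (\<alpha> * of_int m) * - of_int m)) A
      + sc (1 / of_int m * (\<alpha> ^ 2 * of_int m ^ 2 * of_int m)) A"
    unfolding e1 e2 e3 e4 by (simp only: sc_add sc_sc)
  also have "\<dots> = sc (-1) C + sc (- (2 * \<alpha> * of_int m)) B + sc (- (\<alpha> ^ 2 * of_int m ^ 2)) A"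
    unfolding add.assoc[of _ "sc _ A"] sc_addc using m0
    by (intro arg_cong2[where f="(+)"] sc_cong) (simp_all add: field_simps power2_eq_square)
  also have "\<dots> = - Yel emb m \<alpha> L" unfolding Y by (simp add: sc_uminus)
  finally have "Yel emb m \<alpha> L * Xel emb m \<alpha> L = Xel emb m \<alpha> L * Yel emb m \<alpha> L - Yel emb m \<alpha> L"
    by (simp add: algebra_simps)
  then show ?thesis by (simp add: XE_def distrib_right left_diff_distrib)
qed

lemma comm_Xel: "(\<And>k. a * L k = L k * a) \<Longrightarrow> a * Xel emb m \<alpha> L = Xel emb m \<alpha> L * a"
  unfolding Xel_sc by (simp add: sc_mult_left sc_mult_right distrib_left distrib_right)

lemma comm_Yel: "(\<And>k. a * L k = L k * a) \<Longrightarrow> a * Yel emb m \<alpha> L = Yel emb m \<alpha> L * a"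
  unfolding Yel_sc by (simp add: sc_mult_left sc_mult_right distrib_left distrib_right)

text \<open>The two tensor factors commute as far as needed: the sign rule only matters between two
  odd elements, and X, Y are even.\<close>

lemma supercomm_cross:
  assumes "svir_supercomm L1 G1 L2 G2"
  shows "L2 k * Xel emb m \<alpha> L1 = Xel emb m \<alpha> L1 * L2 k"
    and "G2 k * Xel emb m \<alpha> L1 = Xel emb m \<alpha> L1 * G2 k"
    and "L1 k * Yel emb m \<alpha> L2 = Yel emb m \<alpha> L2 * L1 k"
    and "G1 k * Yel emb m \<alpha> L2 = Yel emb m \<alpha> L2 * G1 k"
    and "Xel emb m \<alpha> L1 * Yel emb m \<alpha> L2 = Yel emb m \<alpha> L2 * Xel emb m \<alpha> L1"
proof -
  have c1: "\<And>i j. L1 i * L2 j = L2 j * L1 i" and c2: "\<And>i j. L1 i * G2 j = G2 j * L1 i"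
    and c3: "\<And>i j. G1 i * L2 j = L2 j * G1 i"
    using assms unfolding svir_supercomm_def by blast+
  show XL2: "L2 k' * Xel emb m \<alpha> L1 = Xel emb m \<alpha> L1 * L2 k'" for k'
    by (rule comm_Xel) (simp add: c1)
  show "G2 k * Xel emb m \<alpha> L1 = Xel emb m \<alpha> L1 * G2 k" by (rule comm_Xel) (simp add: c2)
  show "L1 k * Yel emb m \<alpha> L2 = Yel emb m \<alpha> L2 * L1 k" by (rule comm_Yel) (simp add: c1)
  show "G1 k * Yel emb m \<alpha> L2 = Yel emb m \<alpha> L2 * G1 k" by (rule comm_Yel) (simp add: c3)
  show "Xel emb m \<alpha> L1 * Yel emb m \<alpha> L2 = Yel emb m \<alpha> L2 * Xel emb m \<alpha> L1"
    by (rule comm_Yel) (simp add: XL2)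
qed

end


lemma kappa_L: "kappa \<alpha> 1 (of_int m) (of_int i) s = \<alpha> ^ s * gbin (of_int m) (of_int ((int s - 2) * m - i)) s"
  unfolding kappa_def by (simp add: algebra_simps)

lemma kappa_G: "kappa \<alpha> (1 / 2) (of_int m) k s = \<alpha> ^ s * gbin (of_int m) ((of_nat s - 3 / 2) * of_int m - k) s"
  unfolding kappa_def by (simp add: algebra_simps)

lemma acoef_eq: "acoef m r i s = ladder_coef (of_int m) 1 (of_int i) r s"
  unfolding acoef_def ladder_coef_def by (intro sum.cong refl) (simp add: algebra_simps)

lemma bcoef_eq: "bcoef m r k s = ladder_coef (of_int m) (1 / 2) k r s"
  unfolding bcoef_def ladder_coef_def by (intro sum.cong refl) (simp add: algebra_simps)

lemma coef_L: "(-1) ^ s * kappa \<alpha> 1 (of_int m) (of_int i) s * \<alpha> ^ q * ladder_coef (of_int m) 1 (of_int i - of_nat s * of_int m) p q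
   = (-1) ^ s * \<alpha> ^ (s + q) * gbin (of_int m) (of_int ((int s - 2) * m - i)) s * acoef m p (i - int s * m) q"
  unfolding kappa_L acoef_eq by (simp add: power_add algebra_simps)

lemma coef_G: "(-1) ^ s * kappa \<alpha> (1 / 2) (of_int m) k s * \<alpha> ^ q * ladder_coef (of_int m) (1 / 2) (k - of_nat s * of_int m) p q
   = (-1) ^ s * \<alpha> ^ (s + q) * gbin (of_int m) ((of_nat s - 3 / 2) * of_int m - k) s * bcoef m p (k - of_nat s * of_int m) q"
  unfolding kappa_G bcoef_eq by (simp add: power_add algebra_simps)

theorem lemma3p5:
  fixes emb :: "'f::field_char_0 \<Rightarrow> 'b::ring_1"
    and eps2 :: int and m :: int and \<alpha> :: 'f
    and L1 G1 L2 G2 :: "int \<Rightarrow> 'b"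
    and a :: 'f and i :: int and j :: int
  assumes emb: "central_emb emb"
    and eps: "eps2 \<in> {0, 1}"
    and m: "m \<noteq> 0"
    and rel1: "svir_rel emb eps2 L1 G1"
    and rel2: "svir_rel emb eps2 L2 G2"
    and comm: "svir_supercomm L1 G1 L2 G2"
  defines "k \<equiv> (of_int j + of_int eps2 / 2 :: 'f)"
    and "X \<equiv> Xel emb m \<alpha> L1"
    and "Y1 \<equiv> Yel emb m \<alpha> L1"
    and "Y2 \<equiv> Yel emb m \<alpha> L2"
    and "F \<equiv> Fser emb m \<alpha> L1 L2"
    and "u \<equiv> user emb m \<alpha> L1"
  shows
   "fps_const (L1 i) * F a =
      fps_tsum (\<lambda>s. fps_const (emb (\<alpha> ^ s * gbin (of_int m) (of_int ((int s - 2) * m - i)) s))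
        * F (a - of_int i / of_int m + of_nat s)
        * (fps_const (L1 (i - int s * m) * Y2 ^ s) * fps_X ^ s))
  \<and> fps_const (G1 j) * F a =
      fps_tsum (\<lambda>s. fps_const (emb (\<alpha> ^ s * gbin (of_int m) ((of_nat s - 3 / 2) * of_int m - k) s))
        * F (a - k / of_int m + of_nat s)
        * (fps_const (G1 (j - int s * m) * Y2 ^ s) * fps_X ^ s))
  \<and> fps_const (L2 i) * F a =
      fps_tsum (\<lambda>s. fps_const (emb ((-1) ^ s)) * F (a + of_nat s)
        * (fps_const (\<Sum>p\<le>2 * s. emb (\<alpha> ^ p * acoef m s i p)
              * rise (X + emb a) s * L2 (i + (int s - int p) * m)) * fps_X ^ s))
  \<and> fps_const (G2 j) * F a =
      fps_tsum (\<lambda>s. fps_const (emb ((-1) ^ s)) * F (a + of_nat s)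
        * (fps_const (\<Sum>p\<le>2 * s. emb (\<alpha> ^ p * bcoef m s k p)
              * rise (X + emb a) s * G2 (j + (int s - int p) * m)) * fps_X ^ s))
  \<and> fps_const (L1 i) * u a =
      u (a + of_int i / of_int m) *
      fps_tsum (\<lambda>s. fps_tsum (\<lambda>p. fps_const (\<Sum>q\<le>2 * p.
          emb ((-1) ^ s * \<alpha> ^ (s + q) * gbin (of_int m) (of_int ((int s - 2) * m - i)) s
                * acoef m p (i - int s * m) q)
          * fall (X + emb (- a - of_int i / of_int m)) p
          * L1 (i + (int p - int s - int q) * m) * Y1 ^ s) * fps_X ^ (s + p)))
  \<and> fps_const (G1 j) * u a =
      u (a + k / of_int m) *
      fps_tsum (\<lambda>s. fps_tsum (\<lambda>p. fps_const (\<Sum>q\<le>2 * p.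
          emb ((-1) ^ s * \<alpha> ^ (s + q) * gbin (of_int m) ((of_nat s - 3 / 2) * of_int m - k) s
                * bcoef m p (k - of_nat s * of_int m) q)
          * fall (X + emb (- a - k / of_int m)) p
          * G1 (j + (int p - int s - int q) * m) * Y1 ^ s) * fps_X ^ (s + p)))"
proof -
  interpret central_scalars emb by unfold_locales (rule emb)
  have m0: "(of_int m :: 'f) \<noteq> 0" using m by simp
  have Xd: "X = Xel emb m \<alpha> L1" and Y1d: "Y1 = Yel emb m \<alpha> L1" and Y2d: "Y2 = Yel emb m \<alpha> L2"
    unfolding X_def Y1_def Y2_def by (rule refl)+
  have wL1: "weight_family L1 0 1 L1" and wG1: "weight_family L1 (of_int eps2 / 2) (1 / 2) G1"
    using svir_weight_families[OF rel1] by blast+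
  have wL2: "weight_family L2 0 1 L2" and wG2: "weight_family L2 (of_int eps2 / 2) (1 / 2) G2"
    using svir_weight_families[OF rel2] by blast+
  have xL: "of_int i = 0 + (of_int i :: 'f)" and xG: "k = of_int eps2 / 2 + of_int j"
    by (simp_all add: k_def)
  note XL = weight_family_X_shift[OF wL1 m0 xL, of \<alpha>, folded Xd]
  note XG = weight_family_X_shift[OF wG1 m0 xG, of \<alpha>, folded Xd]
  note cross = supercomm_cross[OF comm, where m=m and \<alpha>=\<alpha>, folded Xd Y2d]
  have Y1X: "Y1 * X = XE X (-1) * Y1" unfolding Xd Y1d by (rule Yel_Xel[OF m0 wL1])
  show ?thesis
    unfolding F_def u_def
    using first_copy_through_F[OF m0 Xd Y2d XL cross(3), of a, unfolded kappa_L]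
      first_copy_through_F[OF m0 Xd Y2d XG cross(4), of a, unfolded kappa_G]
      second_copy_through_F[OF Xd Y2d weight_family_Y_ladder[OF wL2 xL, of m \<alpha>, folded Y2d] cross(1,5),
        of a, folded acoef_eq]
      second_copy_through_F[OF Xd Y2d weight_family_Y_ladder[OF wG2 xG, of m \<alpha>, folded Y2d] cross(2,5),
        of a, folded bcoef_eq]
      through_u[OF m0 Xd Y1d XL weight_family_Y_ladder[OF wL1 xL, of m \<alpha>, folded Y1d] Y1X,
        of a, unfolded coef_L]
      through_u[OF m0 Xd Y1d XG weight_family_Y_ladder[OF wG1 xG, of m \<alpha>, folded Y1d] Y1X,
        of a, unfolded coef_G]
    by blast
qed

end
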